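(* Assume the power injection $p$ satisfies: each $p_i$ is piece-wise continuous and there exists $0\leqslant\bar t<\infty$ with $p_i(t)=p_i^*$ for all $i\in\mathcal{I}$ and $t\geqslant\bar t$, where $\sum_{i\in\mathcal{I}}p_i^*=0$. Assume $\epsilon_iT_i<1$ for every $i\in\mathcal{I}_u$. Then the closed-loop system described in the context (network dynamics with $\alpha=\alpha_{DF}+\alpha_{MPC}$) satisfies: (i) (frequency invariance) for every $i\in\mathcal{I}_\omega$, if $\omega_i(0)\in[\underline\omega_i,\bar\omega_i]$ then $\omega_i(t)\in[\underline\omega_i,\bar\omega_i]$ for all $t\geqslant0$; (ii) (frequency attractivity) for every $i\in\mathcal{I}_\omega$, if $\omega_i(0)\notin[\underline\omega_i,\bar\omega_i]$ then there exists a finite $t_0$ with $\omega_i(t)\in[\underline\omega_i,\bar\omega_i]$ for all $t\geqslant t_0$; (iii) (asymptotic stability) the closed-loop trajectory converges to the same equilibrium $(f_\infty,\mathbf{0}_n)$ as the open-loop system ($\alpha\equiv\mathbf{0}_n$). Furthermore, $\alpha(t)$, $\alpha_{MPC}(t)$ and $\alpha_{DF}(t)$ converge to $\mathbf{0}_n$ as $t\to\infty$.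
   Context: Network: $\mathcal{G}=(\mathcal{I},\mathcal{E})$ connected undirected graph, $\mathcal{I}=\{1,\dots,n\}$, $\mathcal{E}=\{e_1,\dots,e_m\}$, fixed orientation, incidence matrix $D\in\mathbb{R}^{m\times n}$; $M=\mathrm{diag}(M_i)$, $E=\mathrm{diag}(E_i)$ with $M_i,E_i>0$; $Y_b\in\mathbb{R}^{m\times m}$ diagonal positive. $\mathcal{I}_\omega\subseteq\mathcal{I}_u\subseteq\mathcal{I}$; $\mathbb{A}=\{y\in\mathbb{R}^n:y_w=0\ \forall w\notin\mathcal{I}_u\}$. Dynamics: $\dot f=Y_bD\omega$, $M\dot\omega=-E\omega-D^Tf+p(t)+\alpha(t)$. Under the assumption on $p$, the open-loop system ($\alpha\equiv0$) converges to an equilibrium $(f_\infty,\mathbf{0}_n)$ determined by the power injection profile and network parameters. Bottom layer (MPC): parameters $T,\tilde t>0$, $N=\lceil\tilde t/T\rceil$, $c_i,\epsilon_i,T_i>0$ ($i\in\mathcal{I}_u$), $d>0$, safe bounds $\underline\omega_i<\bar\omega_i$ ($i\in\mathcal{I}_\omega$). For $\hat P=[\hat p(0),\dots,\hat p(N-1)]$, $f_0,\omega_0$, $a_0\in\mathbb{A}$, $\hat u^*(\hat P,f_0,\omega_0,a_0)$ is the $\hat u$-part of the unique optimal solution of: minimize $\sum_{i\in\mathcal{I}_u}c_i\hat u_i^2+d\beta^2$ over $\hat f(k),\hat\omega(k),\hat\alpha(k)$ ($k=0..N$), $\hat u\in\mathbb{R}^n$, $\beta\in\mathbb{R}$, s.t.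 for $k=0..N-1$: $\hat f(k+1)=\hat f(k)+TY_bD\hat\omega(k)$; $M\hat\omega(k+1)=M\hat\omega(k)+T(-E\hat\omega(k)-D^T\hat f(k)+\hat p(k)+\hat u)$; $\hat\alpha_i(k+1)=\hat\alpha_i(k)+T(-\hat\alpha_i(k)/T_i-\hat\omega_i(k)+\hat u_i)$ ($i\in\mathcal{I}_u$); $\hat\alpha_i\equiv0$ ($i\notin\mathcal{I}_u$); $\hat u\in\mathbb{A}$; $(\hat f(0),\hat\omega(0),\hat\alpha(0))=(f_0,\omega_0,a_0)$; $\underline\omega_i-\beta\leqslant\hat\omega_i(k+1)\leqslant\bar\omega_i+\beta$ ($i\in\mathcal{I}_\omega$); $|\hat u_i|\leqslant\epsilon_i|a_{0,i}|$ ($i\in\mathcal{I}_u$). Sampling times $0=\Delta^0<\Delta^1<\cdots$; piece-wise continuous forecasts $p^{fcst}_{\Delta^j}:[\Delta^j,\Delta^j+\tilde t]\to\mathbb{R}^n$, $\hat P^{fcst}_j=[p^{fcst}_{\Delta^j}(\Delta^j+kT)]_{k=0}^{N-1}$. Then $u_{MPC}(t)=\hat u^*(\hat P^{fcst}_j,f(\Delta^j),\omega(\Delta^j),\alpha_{MPC}(\Delta^j))$ for $t\in[\Delta^j,\Delta^{j+1})$; stability filter $\hat u_{MPC,i}(t)=\max\{-\epsilon_i|\alpha_{MPC,i}(t)|,\min\{\epsilon_i|\alpha_{MPC,i}(t)|,u_{MPC,i}(t)\}\}$; low-pass filter $\dot\alpha_{MPC,i}=-\alpha_{MPC,i}/T_i-\omega_i+\hat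 u_{MPC,i}$ for $i\in\mathcal{I}_u$, $\alpha_{MPC,i}\equiv0$ otherwise. Top layer: for $i\in\mathcal{I}_\omega$ let $\bar\gamma_i,\underline\gamma_i>0$ and $\underline\omega_i<\underline\omega_i^{thr}<0<\bar\omega_i^{thr}<\bar\omega_i$; let $v_i=E_i\omega_i+[D^T]_if-p_i-\alpha_{MPC,i}$ (where $[D^T]_i$ is the $i$th row of $D^T$), and $\alpha_{DF,i}=\min\{0,\bar\gamma_i(\bar\omega_i-\omega_i)/(\omega_i-\bar\omega_i^{thr})+v_i\}$ if $\omega_i>\bar\omega_i^{thr}$, $\alpha_{DF,i}=0$ if $\underline\omega_i^{thr}\leqslant\omega_i\leqslant\bar\omega_i^{thr}$, $\alpha_{DF,i}=\max\{0,\underline\gamma_i(\underline\omega_i-\omega_i)/(\underline\omega_i^{thr}-\omega_i)+v_i\}$ if $\omega_i<\underline\omega_i^{thr}$; $\alpha_{DF,i}\equiv0$ for $i\notin\mathcal{I}_\omega$. The total control is $\alpha=\alpha_{DF}+\alpha_{MPC}$. *)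

theory Defs
  imports "HOL-Analysis.Analysis"
begin

definition incidence_matrix :: "('e::finite \<Rightarrow> 'i::finite) \<Rightarrow> ('e \<Rightarrow> 'i) \<Rightarrow> real^'i^'e" where
  "incidence_matrix src snk = (\<chi> e i. if i = src e then 1 else if i = snk e then -1 else 0)"

definition simple_graph :: "('e \<Rightarrow> 'i) \<Rightarrow> ('e \<Rightarrow> 'i) \<Rightarrow> bool" where
  "simple_graph src snk \<longleftrightarrow> (\<forall>e. src e \<noteq> snk e) \<and>
     (\<forall>e e'. {src e, snk e} = {src e', snk e'} \<longrightarrow> e = e')"

definition connected_graph :: "('e \<Rightarrow> 'i) \<Rightarrow> ('e \<Rightarrow> 'i) \<Rightarrow> bool" where
  "connected_graph src snk \<longleftrightarrow>
     (\<forall>i j. (i, j) \<in> ({(src e, snk e) | e. True} \<union> {(snk e, src e) | e. True})\<^sup>*)"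

definition piecewise_continuous_on :: "real set \<Rightarrow> (real \<Rightarrow> real) \<Rightarrow> bool" where
  "piecewise_continuous_on I g \<longleftrightarrow>
     (\<exists>S. (\<forall>a b. finite (S \<inter> {a..b})) \<and> continuous_on (I - S) g \<and>
          (\<forall>s\<in>S \<inter> I. (\<exists>l. (g \<longlongrightarrow> l) (at s within (I \<inter> {..<s}))) \<and>
                      (\<exists>r. (g \<longlongrightarrow> r) (at s within (I \<inter> {s<..})))))"

text \<open>Feasibility of (fh, wh, ah, u, beta) for the finite horizon problem with data
  P (forecast samples P 0 .. P (N-1)), initial state (f0, w0, a0).
  Y_b = diag y, M = diag Mv, E = diag Ev.\<close>

definition mpc_feasible ::
  "real \<Rightarrow> nat \<Rightarrow> real^'e::finite \<Rightarrow> real^'i::finite^'e \<Rightarrow> real^'i \<Rightarrow> real^'i \<Rightarrow>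
   'i set \<Rightarrow> 'i set \<Rightarrow> ('i \<Rightarrow> real) \<Rightarrow> ('i \<Rightarrow> real) \<Rightarrow> ('i \<Rightarrow> real) \<Rightarrow> ('i \<Rightarrow> real) \<Rightarrow>
   (nat \<Rightarrow> real^'i) \<Rightarrow> real^'e \<Rightarrow> real^'i \<Rightarrow> real^'i \<Rightarrow>
   (nat \<Rightarrow> real^'e) \<Rightarrow> (nat \<Rightarrow> real^'i) \<Rightarrow> (nat \<Rightarrow> real^'i) \<Rightarrow> real^'i \<Rightarrow> real \<Rightarrow> bool" where
  "mpc_feasible T N y D Mv Ev Iu Iw Tc eps wlo whi P f0 w0 a0 fh wh ah u \<beta> \<longleftrightarrow>
     (\<forall>k<N. \<forall>e. fh (Suc k) $ e = fh k $ e + T * (y $ e * (D *v wh k) $ e)) \<and>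
     (\<forall>k<N. \<forall>i. Mv $ i * wh (Suc k) $ i =
        Mv $ i * wh k $ i + T * (- Ev $ i * wh k $ i - (transpose D *v fh k) $ i + P k $ i + u $ i)) \<and>
     (\<forall>k<N. \<forall>i\<in>Iu. ah (Suc k) $ i = ah k $ i + T * (- ah k $ i / Tc i - wh k $ i + u $ i)) \<and>
     (\<forall>k\<le>N. \<forall>i. i \<notin> Iu \<longrightarrow> ah k $ i = 0) \<and>
     (\<forall>i. i \<notin> Iu \<longrightarrow> u $ i = 0) \<and>
     fh 0 = f0 \<and> wh 0 = w0 \<and> ah 0 = a0 \<and>
     (\<forall>k<N. \<forall>i\<in>Iw. wlo i - \<beta> \<le> wh (Suc k) $ i \<and> wh (Suc k) $ i \<le> whi i + \<beta>) \<and>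
     (\<forall>i\<in>Iu. \<bar>u $ i\<bar> \<le> eps i * \<bar>a0 $ i\<bar>)"

definition mpc_cost :: "'i::finite set \<Rightarrow> ('i \<Rightarrow> real) \<Rightarrow> real \<Rightarrow> real^'i \<Rightarrow> real \<Rightarrow> real" where
  "mpc_cost Iu c d u \<beta> = (\<Sum>i\<in>Iu. c i * (u $ i)\<^sup>2) + d * \<beta>\<^sup>2"

definition mpc_u ::
  "real \<Rightarrow> nat \<Rightarrow> real^'e::finite \<Rightarrow> real^'i::finite^'e \<Rightarrow> real^'i \<Rightarrow> real^'i \<Rightarrow>
   'i set \<Rightarrow> 'i set \<Rightarrow> ('i \<Rightarrow> real) \<Rightarrow> ('i \<Rightarrow> real) \<Rightarrow> ('i \<Rightarrow> real) \<Rightarrow> ('i \<Rightarrow> real) \<Rightarrow>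
   ('i \<Rightarrow> real) \<Rightarrow> real \<Rightarrow>
   (nat \<Rightarrow> real^'i) \<Rightarrow> real^'e \<Rightarrow> real^'i \<Rightarrow> real^'i \<Rightarrow> real^'i" where
  "mpc_u T N y D Mv Ev Iu Iw Tc eps wlo whi c d P f0 w0 a0 =
     (THE u. \<exists>fh wh ah \<beta>.
        mpc_feasible T N y D Mv Ev Iu Iw Tc eps wlo whi P f0 w0 a0 fh wh ah u \<beta> \<and>
        (\<forall>fh' wh' ah' u' \<beta>'.
           mpc_feasible T N y D Mv Ev Iu Iw Tc eps wlo whi P f0 w0 a0 fh' wh' ah' u' \<beta>' \<longrightarrow>
           mpc_cost Iu c d u \<beta> \<le> mpc_cost Iu c d u' \<beta>'))"

definition sat :: "real \<Rightarrow> real \<Rightarrow> real \<Rightarrow> real" where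
  "sat \<epsilon> a u = max (- \<epsilon> * \<bar>a\<bar>) (min (\<epsilon> * \<bar>a\<bar>) u)"

definition alpha_df_comp :: "real \<Rightarrow> real \<Rightarrow> real \<Rightarrow> real \<Rightarrow> real \<Rightarrow> real \<Rightarrow> real \<Rightarrow> real \<Rightarrow> real" where
  "alpha_df_comp wl wh wlt wht gl gh w v =
     (if w > wht then min 0 (gh * (wh - w) / (w - wht) + v)
      else if wlt \<le> w then 0
      else max 0 (gl * (wl - w) / (wlt - w) + v))"

definition alpha_df ::
  "real^'i::finite^'e::finite \<Rightarrow> real^'i \<Rightarrow> 'i set \<Rightarrow> ('i \<Rightarrow> real) \<Rightarrow> ('i \<Rightarrow> real) \<Rightarrow>
   ('i \<Rightarrow> real) \<Rightarrow> ('i \<Rightarrow> real) \<Rightarrow> ('i \<Rightarrow> real) \<Rightarrow> ('i \<Rightarrow> real) \<Rightarrow>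
   real^'e \<Rightarrow> real^'i \<Rightarrow> real^'i \<Rightarrow> real^'i \<Rightarrow> real^'i" where
  "alpha_df D Ev Iw wlo whi wlt wht gl gh f w p aM =
     (\<chi> i. if i \<in> Iw then
              alpha_df_comp (wlo i) (whi i) (wlt i) (wht i) (gl i) (gh i) (w $ i)
                 (Ev $ i * w $ i + (transpose D *v f) $ i - p $ i - aM $ i)
            else 0)"

definition locally_finite_set :: "real set \<Rightarrow> bool" where
  "locally_finite_set S \<longleftrightarrow> (\<forall>a b. finite (S \<inter> {a..b}))"

definition open_loop_sol ::
  "real^'e::finite \<Rightarrow> real^'i::finite^'e \<Rightarrow> real^'i \<Rightarrow> real^'i \<Rightarrow> (real \<Rightarrow> real^'i) \<Rightarrow>
   (real \<Rightarrow> real^'e) \<Rightarrow> (real \<Rightarrow> real^'i) \<Rightarrow> bool" where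
  "open_loop_sol y D Mv Ev p f w \<longleftrightarrow>
     continuous_on {0..} f \<and> continuous_on {0..} w \<and>
     (\<exists>S. locally_finite_set S \<and>
        (\<forall>t. t \<ge> 0 \<and> t \<notin> S \<longrightarrow>
           (\<forall>e. ((\<lambda>s. f s $ e) has_real_derivative (y $ e * (D *v w t) $ e)) (at t within {0..})) \<and>
           (\<forall>i. \<exists>w'. ((\<lambda>s. w s $ i) has_real_derivative w') (at t within {0..}) \<and>
                 Mv $ i * w' = - Ev $ i * w t $ i - (transpose D *v f t) $ i + p t $ i)))"

text \<open>Closed-loop solution (f, w, aM) with aM = alpha_MPC; total control alpha = alpha_DF + alpha_MPC.\<close>
definition closed_loop_sol ::
  "real^'e::finite \<Rightarrow> real^'i::finite^'e \<Rightarrow> real^'i \<Rightarrow> real^'i \<Rightarrow> (real \<Rightarrow> real^'i) \<Rightarrow>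
   'i set \<Rightarrow> 'i set \<Rightarrow>
   real \<Rightarrow> nat \<Rightarrow> ('i \<Rightarrow> real) \<Rightarrow> ('i \<Rightarrow> real) \<Rightarrow> ('i \<Rightarrow> real) \<Rightarrow> real \<Rightarrow>
   ('i \<Rightarrow> real) \<Rightarrow> ('i \<Rightarrow> real) \<Rightarrow>
   (nat \<Rightarrow> real) \<Rightarrow> (nat \<Rightarrow> real \<Rightarrow> real^'i) \<Rightarrow>
   ('i \<Rightarrow> real) \<Rightarrow> ('i \<Rightarrow> real) \<Rightarrow> ('i \<Rightarrow> real) \<Rightarrow> ('i \<Rightarrow> real) \<Rightarrow>
   (real \<Rightarrow> real^'e) \<Rightarrow> (real \<Rightarrow> real^'i) \<Rightarrow> (real \<Rightarrow> real^'i) \<Rightarrow> bool" where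
  "closed_loop_sol y D Mv Ev p Iu Iw T N c eps Tc d wlo whi \<Delta> pf wlt wht gl gh f w aM \<longleftrightarrow>
     continuous_on {0..} f \<and> continuous_on {0..} w \<and> continuous_on {0..} aM \<and>
     (\<forall>t\<ge>0. \<forall>i. i \<notin> Iu \<longrightarrow> aM t $ i = 0) \<and>
     (\<exists>S. locally_finite_set S \<and>
        (\<forall>t j. t \<ge> 0 \<and> t \<notin> S \<and> \<Delta> j \<le> t \<and> t < \<Delta> (Suc j) \<longrightarrow>
           (let uM = mpc_u T N y D Mv Ev Iu Iw Tc eps wlo whi c d
                        (\<lambda>k. pf j (\<Delta> j + real k * T)) (f (\<Delta> j)) (w (\<Delta> j)) (aM (\<Delta> j));
                aDF = alpha_df D Ev Iw wlo whi wlt wht gl gh (f t) (w t) (p t) (aM t)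
            in
           (\<forall>e. ((\<lambda>s. f s $ e) has_real_derivative (y $ e * (D *v w t) $ e)) (at t within {0..})) \<and>
           (\<forall>i. \<exists>w'. ((\<lambda>s. w s $ i) has_real_derivative w') (at t within {0..}) \<and>
                 Mv $ i * w' = - Ev $ i * w t $ i - (transpose D *v f t) $ i + p t $ i
                               + (aDF $ i + aM t $ i)) \<and>
           (\<forall>i\<in>Iu. ((\<lambda>s. aM s $ i) has_real_derivative
                 (- aM t $ i / Tc i - w t $ i + sat (eps i) (aM t $ i) (uM $ i))) (at t within {0..})))))"

end

theory Submission
  imports Defs
begin

(* Since w alpha_DF <= 0 and the stability filter bounds the MPC input by eps |alpha_MPC|,
   V = 1/2 w.Mw + 1/2 (f - f* ).Y^-1(f - f* ) + 1/2 |alpha_MPC|^2 (with D^T f* = p*, which exists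
   because the graph is connected and p* sums to zero) is a Lyapunov function for t >= tbar,
   with V' <= -kappa (|w|^2 + |alpha_MPC|^2) and kappa > 0 exactly when eps_i T_i < 1. Barbalat-type
   arguments then give w -> 0 and alpha_MPC -> 0, so alpha_DF is eventually switched off, and
   D^T f -> p*. The top layer pushes the frequency back whenever it leaves [wlo, whi], which
   gives invariance, and w -> 0 gives attractivity. Finally, the Y^-1-weighted component of f
   in ker D^T is conserved by every flow f' = Y D u; this makes the limit of a bounded f
   unique, and the same for the closed and the open loop. *)

section \<open>Monotonicity and Barbalat-type lemmas\<close>

lemma locally_finite_set_Un:
  "locally_finite_set A \<Longrightarrow> locally_finite_set B \<Longrightarrow> locally_finite_set (A \<union> B)"
  unfolding locally_finite_set_def by (auto simp: Int_Un_distrib2)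

lemma has_real_derivative_at_if_within_atLeast:
  assumes "c < t" "(g has_real_derivative d) (at t within {c..})"
  shows "(g has_real_derivative d) (at t)"
  using assms at_within_interior[of t "{c..}"] by simp

lemma increment_le_if_deriv_le_finite_exceptions:
  fixes g :: "real \<Rightarrow> real"
  assumes "finite S" "a \<le> b" "continuous_on {a..b} g"
    and "\<And>x. a < x \<Longrightarrow> x < b \<Longrightarrow> x \<notin> S \<Longrightarrow> \<exists>d. (g has_real_derivative d) (at x) \<and> d \<le> K"
  shows "g b - g a \<le> K * (b - a)"
  using assms
proof (induction S arbitrary: a b rule: finite_induct)
  case empty
  have "(\<lambda>x. g x - K * x) b \<le> (\<lambda>x. g x - K * x) a"
  proof (rule DERIV_nonpos_imp_decreasing_open[OF empty.prems(1)])
    fix x assume "a < x" "x < b"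
    then obtain d where "(g has_real_derivative d) (at x)" "d \<le> K" using empty.prems(3) by blast
    then show "\<exists>y. ((\<lambda>x. g x - K * x) has_real_derivative y) (at x) \<and> y \<le> 0"
      by (intro exI[of _ "d - K"]) (auto intro!: derivative_eq_intros)
  qed (auto intro!: continuous_intros empty.prems(2))
  then show ?case by (simp add: algebra_simps)
next
  case (insert s S)
  show ?case
  proof (cases "a < s \<and> s < b")
    case True
    have "g s - g a \<le> K * (s - a)" "g b - g s \<le> K * (b - s)"
      by (rule insert.IH; use True insert.prems in \<open>auto intro: continuous_on_subset\<close>)+
    then show ?thesis by (simp add: algebra_simps)
  next
    case False
    then show ?thesis by (intro insert.IH) (use insert.prems in auto)
  qed
qed

lemma increment_le_if_deriv_le:
  fixes g :: "real \<Rightarrow> real"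
  assumes "locally_finite_set S" "a \<le> b" "continuous_on {a..b} g"
    and "\<And>x. a < x \<Longrightarrow> x < b \<Longrightarrow> x \<notin> S \<Longrightarrow> \<exists>d. (g has_real_derivative d) (at x) \<and> d \<le> K"
  shows "g b - g a \<le> K * (b - a)"
proof (rule increment_le_if_deriv_le_finite_exceptions[of "S \<inter> {a..b}"])
  show "finite (S \<inter> {a..b})" using assms(1) unfolding locally_finite_set_def by blast
qed (use assms in auto)

lemma abs_increment_le_if_abs_deriv_le:
  fixes g :: "real \<Rightarrow> real"
  assumes S: "locally_finite_set S" and "a \<le> b" "continuous_on {a..b} g"
    and deriv: "\<And>x. a < x \<Longrightarrow> x < b \<Longrightarrow> x \<notin> S \<Longrightarrow> \<exists>d. (g has_real_derivative d) (at x) \<and> \<bar>d\<bar> \<le> K"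
  shows "\<bar>g b - g a\<bar> \<le> K * (b - a)"
proof -
  have "g b - g a \<le> K * (b - a)"
    by (rule increment_le_if_deriv_le[OF assms(1-3)]) (use deriv in force)
  moreover have "(\<lambda>x. - g x) b - (\<lambda>x. - g x) a \<le> K * (b - a)"
  proof (rule increment_le_if_deriv_le[OF assms(1,2)])
    show "continuous_on {a..b} (\<lambda>x. - g x)" using assms(3) by (intro continuous_intros)
    fix x assume "a < x" "x < b" "x \<notin> S"
    then obtain d where "(g has_real_derivative d) (at x)" "\<bar>d\<bar> \<le> K" using deriv by blast
    then show "\<exists>d. ((\<lambda>x. - g x) has_real_derivative d) (at x) \<and> d \<le> K"
      by (intro exI[of _ "-d"]) (auto intro!: derivative_eq_intros)
  qed
  ultimately show ?thesis by linarith
qed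

lemma lipschitz_if_abs_deriv_le:
  fixes g :: "real \<Rightarrow> real"
  assumes "locally_finite_set S" "continuous_on {t0..} g"
    and "\<And>x. t0 < x \<Longrightarrow> x \<notin> S \<Longrightarrow> \<exists>d. (g has_real_derivative d) (at x) \<and> \<bar>d\<bar> \<le> K"
  shows "\<exists>L>0. \<forall>s t. t0 \<le> s \<longrightarrow> s \<le> t \<longrightarrow> \<bar>g t - g s\<bar> \<le> L * (t - s)"
proof (intro exI[of _ "\<bar>K\<bar> + 1"] conjI allI impI)
  fix s t assume st: "t0 \<le> s" "s \<le> t"
  show "\<bar>g t - g s\<bar> \<le> (\<bar>K\<bar> + 1) * (t - s)"
  proof (rule abs_increment_le_if_abs_deriv_le[OF assms(1) st(2)])
    show "continuous_on {s..t} g" using assms(2) by (rule continuous_on_subset) (use st in auto)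
    fix x assume "s < x" "x < t" "x \<notin> S"
    then obtain d where "(g has_real_derivative d) (at x)" "\<bar>d\<bar> \<le> K" using assms(3) st by force
    then show "\<exists>d. (g has_real_derivative d) (at x) \<and> \<bar>d\<bar> \<le> \<bar>K\<bar> + 1" by force
  qed
qed simp

lemma le_if_deriv_nonpos_above:
  fixes g :: "real \<Rightarrow> real"
  assumes S: "locally_finite_set S" and cont: "continuous_on {t0..} g" and start: "g t0 \<le> h"
    and deriv: "\<And>x. t0 < x \<Longrightarrow> x \<notin> S \<Longrightarrow> h < g x \<Longrightarrow> \<exists>d. (g has_real_derivative d) (at x) \<and> d \<le> 0"
    and t: "t0 \<le> t"
  shows "g t \<le> h"
proof (rule ccontr)
  assume gt: "\<not> g t \<le> h"
  define A where "A = {t0..t} \<inter> g -` {..h}"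
  have "closed A" unfolding A_def
    by (rule continuous_closed_preimage) (auto intro: continuous_on_subset[OF cont])
  moreover have "t0 \<in> A" using start t unfolding A_def by auto
  moreover have bdd: "bdd_above A" unfolding A_def by (rule bdd_aboveI[of _ t]) auto
  ultimately have "Sup A \<in> A" using closed_contains_Sup by blast
  then have s: "t0 \<le> Sup A" "Sup A \<le> t" unfolding A_def by auto
  have above: "h < g x" if "Sup A < x" "x \<le> t" for x
    using that s cSup_upper[OF _ bdd, of x] unfolding A_def by force
  have "g t - g (Sup A) \<le> 0 * (t - Sup A)"
  proof (rule increment_le_if_deriv_le[OF S s(2)])
    show "continuous_on {Sup A..t} g" by (rule continuous_on_subset[OF cont]) (use s in auto)
  qed (use deriv above s in auto)
  moreover have "g (Sup A) \<le> h" using \<open>Sup A \<in> A\<close> unfolding A_def by auto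
  ultimately show False using gt by simp
qed

lemma antimono_bdd_below_settles:
  fixes V :: "real \<Rightarrow> real"
  assumes mono: "\<And>s t. t0 \<le> s \<Longrightarrow> s \<le> t \<Longrightarrow> V t \<le> V s" and bdd: "\<And>t. t0 \<le> t \<Longrightarrow> B \<le> V t"
    and "0 < \<eta>"
  shows "\<exists>T\<ge>t0. \<forall>s t. T \<le> s \<longrightarrow> s \<le> t \<longrightarrow> V s - V t < \<eta>"
proof -
  have bdd_V: "bdd_below (V ` {t0..})" using bdd by (intro bdd_belowI[of _ B]) auto
  have "\<exists>x\<in>V ` {t0..}. x < Inf (V ` {t0..}) + \<eta>"
    by (rule cInf_lessD) (use assms(3) in auto)
  then obtain T where T: "t0 \<le> T" "V T < Inf (V ` {t0..}) + \<eta>" by auto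
  have "V s - V t < \<eta>" if "T \<le> s" "s \<le> t" for s t
    using mono[of T s] cInf_lower[OF _ bdd_V, of "V t"] that T by auto
  with T show ?thesis by blast
qed

lemma barbalat_dissipation_tendsto_0:
  fixes q V :: "real \<Rightarrow> real"
  assumes K: "0 < K" and lip: "\<And>s t. t0 \<le> s \<Longrightarrow> s \<le> t \<Longrightarrow> \<bar>q t - q s\<bar> \<le> K * (t - s)"
    and bdd: "\<And>t. t0 \<le> t \<Longrightarrow> B \<le> V t" and \<kappa>: "0 < \<kappa>"
    and dissip: "\<And>s t c. t0 \<le> s \<Longrightarrow> s \<le> t \<Longrightarrow> (\<And>x. s < x \<Longrightarrow> x < t \<Longrightarrow> c \<le> (q x)\<^sup>2) \<Longrightarrow>
                   V t - V s \<le> - \<kappa> * c * (t - s)"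
  shows "(q \<longlongrightarrow> 0) at_top"
proof -
  have mono: "V t \<le> V s" if "t0 \<le> s" "s \<le> t" for s t
    using dissip[OF that, of 0] by simp
  show ?thesis
    unfolding tendsto_iff dist_real_def eventually_at_top_linorder
  proof (intro allI impI)
    fix \<epsilon> :: real assume \<epsilon>: "0 < \<epsilon>"
    define \<delta> where "\<delta> = \<epsilon> / (2 * K)"
    define c where "c = (\<epsilon> / 2)\<^sup>2"
    have \<delta>: "0 < \<delta>" "K * \<delta> = \<epsilon> / 2" unfolding \<delta>_def using K \<epsilon> by auto
    have c: "0 < c" unfolding c_def using \<epsilon> by auto
    obtain T where T: "t0 \<le> T" "\<And>s t. T \<le> s \<Longrightarrow> s \<le> t \<Longrightarrow> V s - V t < \<kappa> * c * \<delta>"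
      using antimono_bdd_below_settles[of t0 V B "\<kappa> * c * \<delta>"] mono bdd \<kappa> c \<delta> by auto
    have "\<bar>q t - 0\<bar> < \<epsilon>" if t: "T \<le> t" for t
    proof (rule ccontr)
      assume "\<not> \<bar>q t - 0\<bar> < \<epsilon>"
      then have qt: "\<epsilon> \<le> \<bar>q t\<bar>" by simp
      have "V (t + \<delta>) - V t \<le> - \<kappa> * c * (t + \<delta> - t)"
      proof (rule dissip)
        fix x assume x: "t < x" "x < t + \<delta>"
        have "\<bar>q x - q t\<bar> \<le> K * (x - t)" using lip[of t x] x t T by auto
        also have "\<dots> \<le> K * \<delta>" using x K by (intro mult_left_mono) auto
        finally have "\<bar>q x - q t\<bar> \<le> K * \<delta>" .
        then have "\<epsilon> / 2 \<le> \<bar>q x\<bar>" using qt \<delta> by linarith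
        then show "c \<le> (q x)\<^sup>2" unfolding c_def using \<epsilon> power_mono[of "\<epsilon> / 2" "\<bar>q x\<bar>" 2] by simp
      qed (use t T \<delta> in auto)
      then show False using T(2)[of t "t + \<delta>"] t \<delta> by auto
    qed
    then show "\<exists>T. \<forall>t\<ge>T. \<bar>q t - 0\<bar> < \<epsilon>" by blast
  qed
qed

lemma barbalat_deriv_tendsto_0:
  fixes x g r :: "real \<Rightarrow> real"
  assumes S: "locally_finite_set S" and cont: "continuous_on {t0..} x"
    and x: "(x \<longlongrightarrow> 0) at_top" and r: "(r \<longlongrightarrow> 0) at_top"
    and K: "0 < K" and lip: "\<And>s t. t0 \<le> s \<Longrightarrow> s \<le> t \<Longrightarrow> \<bar>g t - g s\<bar> \<le> K * (t - s)"
    and deriv: "\<And>t. t0 < t \<Longrightarrow> t \<notin> S \<Longrightarrow> (x has_real_derivative g t + r t) (at t)"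
  shows "(g \<longlongrightarrow> 0) at_top"
  unfolding tendsto_iff dist_real_def eventually_at_top_linorder
proof (intro allI impI)
  fix \<epsilon> :: real assume \<epsilon>: "0 < \<epsilon>"
  define \<delta> where "\<delta> = \<epsilon> / (2 * K)"
  have \<delta>: "0 < \<delta>" "K * \<delta> = \<epsilon> / 2" unfolding \<delta>_def using K \<epsilon> by auto
  define \<eta> where "\<eta> = \<epsilon> * \<delta> / 8"
  have "0 < \<eta>" unfolding \<eta>_def using \<epsilon> \<delta> by simp
  then have "\<forall>\<^sub>F t in at_top. \<bar>x t\<bar> < \<eta> \<and> \<bar>r t\<bar> < \<epsilon> / 4 \<and> t0 \<le> t"
    using x[unfolded tendsto_iff dist_real_def, rule_format, of \<eta>]
      r[unfolded tendsto_iff dist_real_def, rule_format, of "\<epsilon> / 4"] \<epsilon>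
    by (intro eventually_conj eventually_ge_at_top) auto
  then obtain T where T: "\<And>t. T \<le> t \<Longrightarrow> \<bar>x t\<bar> < \<eta> \<and> \<bar>r t\<bar> < \<epsilon> / 4 \<and> t0 \<le> t"
    unfolding eventually_at_top_linorder by blast
  have "\<bar>g t - 0\<bar> < \<epsilon>" if t: "T \<le> t" for t
  proof (rule ccontr)
    assume "\<not> \<bar>g t - 0\<bar> < \<epsilon>"
    then have gt: "\<epsilon> \<le> \<bar>g t\<bar>" by simp
    define \<sigma> where "\<sigma> = sgn (g t)"
    have \<sigma>: "\<bar>\<sigma>\<bar> = 1" "\<sigma> * g t = \<bar>g t\<bar>" unfolding \<sigma>_def using gt \<epsilon> by (auto simp: sgn_mult_self_eq abs_sgn)
    have \<sigma>_abs: "\<bar>\<sigma> * z\<bar> = \<bar>z\<bar>" for z using \<sigma>(1) by (simp add: abs_mult)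
    \<comment> \<open>On [t, t + \<delta>] the sign of g is frozen, so \<sigma> x grows by at least \<epsilon>\<delta>/4 > 2\<eta>.\<close>
    have "(\<lambda>s. - \<sigma> * x s) (t + \<delta>) - (\<lambda>s. - \<sigma> * x s) t \<le> (- \<epsilon> / 4) * (t + \<delta> - t)"
    proof (rule increment_le_if_deriv_le[OF S])
      show "continuous_on {t..t + \<delta>} (\<lambda>s. - \<sigma> * x s)"
        by (rule continuous_on_subset[of "{t0..}"]) (use T[OF t] in \<open>auto intro!: continuous_intros cont\<close>)
      fix s assume s: "t < s" "s < t + \<delta>" "s \<notin> S"
      have Ts: "T \<le> s" "t0 < s" using s t T[OF t] by auto
      have "\<bar>g s - g t\<bar> \<le> K * (s - t)" using lip[of t s] s T[OF t] by auto
      also have "\<dots> \<le> K * \<delta>" using s K by (intro mult_left_mono) auto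
      finally have "\<bar>g s - g t\<bar> \<le> K * \<delta>" .
      moreover have "\<sigma> * g s = \<bar>g t\<bar> + \<sigma> * (g s - g t)" using \<sigma>(2) by (simp add: algebra_simps)
      moreover have "- \<bar>g s - g t\<bar> \<le> \<sigma> * (g s - g t)"
        using \<sigma>_abs[of "g s - g t"] abs_ge_minus_self[of "\<sigma> * (g s - g t)"] by linarith
      ultimately have "\<epsilon> / 2 \<le> \<sigma> * g s" using gt \<delta> by linarith
      moreover have "- (\<epsilon> / 4) < \<sigma> * r s" using T[OF Ts(1)] \<sigma>_abs[of "r s"] by linarith
      moreover have "((\<lambda>s. - \<sigma> * x s) has_real_derivative - \<sigma> * (g s + r s)) (at s)"
        by (intro DERIV_cmult deriv Ts(2) s(3))
      ultimately show "\<exists>d. ((\<lambda>s. - \<sigma> * x s) has_real_derivative d) (at s) \<and> d \<le> - \<epsilon> / 4"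
        by (intro exI[of _ "- \<sigma> * (g s + r s)"]) (auto simp: algebra_simps)
    qed (use \<delta> in auto)
    moreover have "\<bar>\<sigma> * x (t + \<delta>)\<bar> < \<eta>" "\<bar>\<sigma> * x t\<bar> < \<eta>"
      using T[of t] T[of "t + \<delta>"] t \<delta> \<sigma>_abs by auto
    ultimately show False unfolding \<eta>_def by (simp add: algebra_simps abs_less_iff)
  qed
  then show "\<exists>T. \<forall>t\<ge>T. \<bar>g t - 0\<bar> < \<epsilon>" by blast
qed

lemma tendsto_at_top_if_cluster_points_unique:
  fixes g :: "real \<Rightarrow> 'a::heine_borel"
  assumes bdd: "bounded (g ` {t0..})"
    and unique: "\<And>\<tau>1 \<tau>2 L1 L2. filterlim \<tau>1 at_top sequentially \<Longrightarrow> (\<lambda>n. g (\<tau>1 n)) \<longlonglongrightarrow> L1 \<Longrightarrow>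
                   filterlim \<tau>2 at_top sequentially \<Longrightarrow> (\<lambda>n. g (\<tau>2 n)) \<longlonglongrightarrow> L2 \<Longrightarrow> L1 = L2"
  shows "\<exists>L. (g \<longlongrightarrow> L) at_top"
proof -
  have lin: "filterlim (\<lambda>n. t0 + real n) at_top sequentially"
    by (intro filterlim_tendsto_add_at_top[OF tendsto_const] filterlim_real_sequentially)
  have cluster: "\<exists>L r. filterlim (\<tau> \<circ> r) at_top sequentially \<and> (\<lambda>n. g (\<tau> (r n))) \<longlonglongrightarrow> L"
    if \<tau>: "\<And>n. t0 + real n \<le> \<tau> n" for \<tau>
  proof -
    have "g (\<tau> n) \<in> g ` {t0..}" for n using \<tau>[of n] by (intro imageI) simp
    then have "bounded (range (\<lambda>n. g (\<tau> n)))" by (intro bounded_subset[OF bdd]) blast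
    then obtain L r where r: "strict_mono r" "((\<lambda>n. g (\<tau> n)) \<circ> r) \<longlonglongrightarrow> L"
      using bounded_imp_convergent_subsequence by blast
    have "t0 + real n \<le> (\<tau> \<circ> r) n" for n using \<tau>[of "r n"] seq_suble[OF r(1), of n] by simp
    then have "filterlim (\<tau> \<circ> r) at_top sequentially"
      by (intro filterlim_at_top_mono[OF lin] always_eventually) blast
    with r(2) show ?thesis unfolding o_def by blast
  qed
  obtain L0 r0 where \<tau>0: "filterlim ((\<lambda>n. t0 + real n) \<circ> r0) at_top sequentially"
      "(\<lambda>n. g (t0 + real (r0 n))) \<longlonglongrightarrow> L0"
    using cluster[of "\<lambda>n. t0 + real n"] by auto
  have "(g \<longlongrightarrow> L0) at_top"
  proof (rule ccontr)
    assume "\<not> (g \<longlongrightarrow> L0) at_top"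
    then obtain \<epsilon> where \<epsilon>: "0 < \<epsilon>" "\<forall>T. \<exists>t\<ge>T. \<epsilon> \<le> dist (g t) L0"
      unfolding tendsto_iff eventually_at_top_linorder by (auto simp: not_less)
    then have "\<forall>n. \<exists>t. t0 + real n \<le> t \<and> \<epsilon> \<le> dist (g t) L0" by blast
    then obtain \<tau> where \<tau>: "\<And>n. t0 + real n \<le> \<tau> n" "\<And>n. \<epsilon> \<le> dist (g (\<tau> n)) L0" by metis
    obtain L1 r1 where \<tau>1: "filterlim (\<tau> \<circ> r1) at_top sequentially" "(\<lambda>n. g (\<tau> (r1 n))) \<longlonglongrightarrow> L1"
      using cluster[OF \<tau>(1)] by blast
    have "\<epsilon> \<le> dist L1 L0"
      by (rule tendsto_lowerbound[OF tendsto_dist[OF \<tau>1(2) tendsto_const]])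
         (simp_all add: \<tau>(2))
    moreover have "L1 = L0"
      by (rule unique[of "\<tau> \<circ> r1" _ "(\<lambda>n. t0 + real n) \<circ> r0"]) (use \<tau>1 \<tau>0 in \<open>simp_all add: o_def\<close>)
    ultimately show False using \<epsilon> by simp
  qed
  then show ?thesis by blast
qed

section \<open>Flows on the network\<close>

lemma transpose_mult_vec_nth:
  "(transpose D *v x) $ i = (\<Sum>e\<in>UNIV. D $ e $ i * x $ e)"
  by (simp add: matrix_vector_mult_def transpose_def)

lemma sum_mult_mult_vec_eq_sum_transpose:
  fixes D :: "real^'i::finite^'e::finite"
  shows "(\<Sum>e\<in>UNIV. x $ e * (D *v u) $ e) = (\<Sum>i\<in>UNIV. u $ i * (transpose D *v x) $ i)"
  using dot_lmul_matrix[of x D u] by (simp add: inner_vec_def mult.commute)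

lemma vec_eq_0_if_weighted_sumsq_eq_0:
  fixes \<delta> y :: "real^'e::finite"
  assumes "\<And>e. 0 < y $ e" "(\<Sum>e\<in>UNIV. \<delta> $ e * \<delta> $ e / y $ e) = 0"
  shows "\<delta> = 0"
proof -
  have "\<forall>e\<in>UNIV. \<delta> $ e * \<delta> $ e / y $ e = 0"
    using assms by (subst sum_nonneg_eq_0_iff[symmetric]) (auto simp: less_imp_le)
  then show ?thesis using assms(1) by (auto simp: vec_eq_iff less_le)
qed

(* For delta in the kernel of D^T, the derivative of the Y^-1-weighted component of a flow
   h with h' = Y D u is delta . D u = D^T delta . u = 0. *)
lemma weighted_flow_component_conserved:
  fixes D :: "real^'i::finite^'e::finite" and h :: "real \<Rightarrow> real^'e" and u :: "real \<Rightarrow> real^'i"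
  assumes S: "locally_finite_set S" and cont: "continuous_on {c..} h"
    and deriv: "\<And>t e. c < t \<Longrightarrow> t \<notin> S \<Longrightarrow> ((\<lambda>s. h s $ e) has_real_derivative y $ e * (D *v u t) $ e) (at t)"
    and ker: "transpose D *v \<delta> = 0" and y: "\<And>e. y $ e \<noteq> 0" and t: "c \<le> t"
  shows "(\<Sum>e\<in>UNIV. h t $ e * \<delta> $ e / y $ e) = (\<Sum>e\<in>UNIV. h c $ e * \<delta> $ e / y $ e)"
proof -
  let ?Q = "\<lambda>s. \<Sum>e\<in>UNIV. h s $ e * \<delta> $ e / y $ e"
  have "\<bar>?Q t - ?Q c\<bar> \<le> 0 * (t - c)"
  proof (rule abs_increment_le_if_abs_deriv_le[OF S t])
    show "continuous_on {c..t} ?Q"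
      by (rule continuous_on_subset[of "{c..}"]) (auto intro!: continuous_intros cont simp: y)
    fix x assume x: "c < x" "x < t" "x \<notin> S"
    have "(?Q has_real_derivative (\<Sum>e\<in>UNIV. (y $ e * (D *v u x) $ e) * \<delta> $ e / y $ e)) (at x)"
      by (intro DERIV_sum DERIV_cdivide DERIV_cmult_right deriv) (use x in auto)
    moreover have "(\<Sum>e\<in>UNIV. (y $ e * (D *v u x) $ e) * \<delta> $ e / y $ e) = (\<Sum>e\<in>UNIV. \<delta> $ e * (D *v u x) $ e)"
      using y by (intro sum.cong) auto
    ultimately show "\<exists>d. (?Q has_real_derivative d) (at x) \<and> \<bar>d\<bar> \<le> 0"
      using ker by (simp only: sum_mult_mult_vec_eq_sum_transpose) auto
  qed
  then show ?thesis by simp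
qed

lemma weighted_flow_component_conserved_limit:
  fixes D :: "real^'i::finite^'e::finite" and h :: "real \<Rightarrow> real^'e" and u :: "real \<Rightarrow> real^'i"
  assumes "locally_finite_set S" "continuous_on {c..} h"
    and "\<And>t e. c < t \<Longrightarrow> t \<notin> S \<Longrightarrow> ((\<lambda>s. h s $ e) has_real_derivative y $ e * (D *v u t) $ e) (at t)"
    and "transpose D *v \<delta> = 0" "\<And>e. y $ e \<noteq> 0"
    and \<tau>: "filterlim \<tau> at_top F" "F \<noteq> bot" and lim: "((\<lambda>n. h (\<tau> n)) \<longlongrightarrow> L) F"
  shows "(\<Sum>e\<in>UNIV. L $ e * \<delta> $ e / y $ e) = (\<Sum>e\<in>UNIV. h c $ e * \<delta> $ e / y $ e)"
proof -
  have "((\<lambda>n. \<Sum>e\<in>UNIV. h (\<tau> n) $ e * \<delta> $ e / y $ e) \<longlongrightarrow> (\<Sum>e\<in>UNIV. L $ e * \<delta> $ e / y $ e)) F"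
    by (intro tendsto_intros lim) (simp add: assms(5))
  moreover have "\<forall>\<^sub>F n in F. (\<Sum>e\<in>UNIV. h (\<tau> n) $ e * \<delta> $ e / y $ e) = (\<Sum>e\<in>UNIV. h c $ e * \<delta> $ e / y $ e)"
    using \<tau>(1) unfolding filterlim_at_top
    by (rule allE[of _ c], elim eventually_mono) (rule weighted_flow_component_conserved[OF assms(1-5)])
  ultimately have "((\<lambda>n. \<Sum>e\<in>UNIV. h c $ e * \<delta> $ e / y $ e) \<longlongrightarrow> (\<Sum>e\<in>UNIV. L $ e * \<delta> $ e / y $ e)) F"
    by (rule Lim_transform_eventually)
  then show ?thesis by (rule tendsto_unique[OF \<tau>(2) _ tendsto_const])
qed

lemma transpose_incidence_matrix_mult_axis:
  assumes "src e \<noteq> snk e"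
  shows "transpose (incidence_matrix src snk) *v axis e 1 = axis (src e) 1 - axis (snk e) (1::real)"
proof -
  have "(transpose (incidence_matrix src snk) *v axis e 1) $ k = incidence_matrix src snk $ e $ k" for k
    by (simp only: transpose_mult_vec_nth) (simp add: axis_def if_distrib[of "\<lambda>x. _ * x"] cong: if_cong)
  then show ?thesis using assms by (auto simp: vec_eq_iff incidence_matrix_def axis_def)
qed

lemma connected_graph_axis_diff_in_range:
  fixes src snk :: "'e::finite \<Rightarrow> 'i::finite"
  assumes loopfree: "\<forall>e. src e \<noteq> snk e" and conn: "connected_graph src snk"
  shows "\<exists>g. transpose (incidence_matrix src snk) *v g = axis i 1 - axis j (1::real)"
proof -
  let ?Dt = "transpose (incidence_matrix src snk)"
  have "(i, j) \<in> ({(src e, snk e) | e. True} \<union> {(snk e, src e) | e. True})\<^sup>*"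
    using conn unfolding connected_graph_def by blast
  then show ?thesis
  proof (induction rule: rtrancl_induct)
    case base
    then show ?case by (intro exI[of _ 0]) simp
  next
    case (step k j)
    then obtain g where g: "?Dt *v g = axis i 1 - axis k 1" by blast
    from step(2) obtain e where "k = src e \<and> j = snk e \<or> k = snk e \<and> j = src e" by blast
    then show ?case
    proof (elim disjE conjE)
      assume "k = src e" "j = snk e"
      then have "?Dt *v (g + axis e 1) = axis i 1 - axis j 1"
        using g transpose_incidence_matrix_mult_axis[of src e snk] loopfree
        by (simp add: matrix_vector_right_distrib)
      then show ?case by blast
    next
      assume "k = snk e" "j = src e"
      then have "?Dt *v (g - axis e 1) = axis i 1 - axis j 1"
        using g transpose_incidence_matrix_mult_axis[of src e snk] loopfree
        by (simp add: matrix_vector_mult_diff_distrib)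
      then show ?case by blast
    qed
  qed
qed

lemma connected_graph_zero_sum_in_range:
  fixes src snk :: "'e::finite \<Rightarrow> 'i::finite" and p :: "real^'i"
  assumes "\<forall>e. src e \<noteq> snk e" "connected_graph src snk" "(\<Sum>i\<in>UNIV. p $ i) = 0"
  shows "\<exists>f. transpose (incidence_matrix src snk) *v f = p"
proof -
  let ?Dt = "transpose (incidence_matrix src snk)"
  fix r :: 'i
  have "\<forall>j. \<exists>g. ?Dt *v g = axis j 1 - axis r 1"
    using connected_graph_axis_diff_in_range[OF assms(1,2)] by blast
  then obtain g where g: "\<And>j. ?Dt *v g j = axis j 1 - axis r 1" by metis
  have axis_sum: "(\<Sum>j\<in>UNIV. p $ j *\<^sub>R axis j 1) = p"
    by (simp add: vec_eq_iff sum_component axis_def if_distrib[of "\<lambda>x. _ * x"] cong: if_cong)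
  have "?Dt *v (\<Sum>j\<in>UNIV. p $ j *\<^sub>R g j) = (\<Sum>j\<in>UNIV. p $ j *\<^sub>R (?Dt *v g j))"
    by (simp only: linear_sum[OF matrix_vector_mul_linear] linear_cmul[OF matrix_vector_mul_linear] o_def)
  also have "\<dots> = (\<Sum>j\<in>UNIV. p $ j *\<^sub>R (axis j 1 - axis r 1))" by (simp only: g)
  also have "\<dots> = (\<Sum>j\<in>UNIV. p $ j *\<^sub>R axis j 1) - (\<Sum>j\<in>UNIV. p $ j) *\<^sub>R axis r 1"
    by (simp add: scaleR_diff_right sum_subtractf scaleR_sum_left)
  also have "\<dots> = p" by (simp only: axis_sum assms(3) scaleR_zero_left diff_zero)
  finally show ?thesis by (rule exI)
qed

section \<open>The top layer\<close>

lemma alpha_df_comp_sign: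
  assumes "wlt < 0" "0 < wht"
  shows "w * alpha_df_comp wl wh wlt wht gl gh w v \<le> 0"
  using assms unfolding alpha_df_comp_def by (auto simp: mult_nonneg_nonpos mult_nonpos_nonneg)

lemma alpha_df_comp_eq_0:
  assumes "wlt \<le> w" "w \<le> wht"
  shows "alpha_df_comp wl wh wlt wht gl gh w v = 0"
  using assms unfolding alpha_df_comp_def by auto

lemma abs_alpha_df_comp_le:
  assumes "wl < wlt" "wht < wh" "0 < gl" "0 < gh"
  shows "\<bar>alpha_df_comp wl wh wlt wht gl gh w v\<bar> \<le> gh + gl + \<bar>v\<bar>"
proof -
  have "- 1 \<le> (wh - w) / (w - wht)" if "wht < w" using that assms by (simp add: le_divide_eq)
  then have "- gh \<le> gh * (wh - w) / (w - wht)" if "wht < w"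
    using that mult_left_mono[of "- 1" "(wh - w) / (w - wht)" gh] assms by simp
  moreover have "(wl - w) / (wlt - w) \<le> 1" if "w < wlt" using that assms by (simp add: divide_le_eq)
  then have "gl * (wl - w) / (wlt - w) \<le> gl" if "w < wlt"
    using that mult_left_mono[of "(wl - w) / (wlt - w)" 1 gl] assms by simp
  ultimately show ?thesis using assms unfolding alpha_df_comp_def by auto
qed

lemma alpha_df_comp_less_above:
  assumes "wh < w" "wht < wh" "0 < gh"
  shows "alpha_df_comp wl wh wlt wht gl gh w v < v"
proof -
  have "gh * (wh - w) / (w - wht) < 0" using assms by (auto intro!: divide_neg_pos mult_pos_neg)
  then show ?thesis using assms unfolding alpha_df_comp_def by auto
qed

lemma alpha_df_comp_greater_below:
  assumes "w < wl" "wl < wlt" "wlt \<le> wht" "0 < gl"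
  shows "v < alpha_df_comp wl wh wlt wht gl gh w v"
proof -
  have "0 < gl * (wl - w) / (wlt - w)" using assms by (auto intro!: divide_pos_pos)
  then show ?thesis using assms unfolding alpha_df_comp_def by (simp add: less_max_iff_disj)
qed

lemma alpha_df_comp_forward_invariant:
  fixes x v :: "real \<Rightarrow> real"
  assumes S: "locally_finite_set S" and cont: "continuous_on {c..} x" and start: "x c \<in> {wl..wh}"
    and m: "0 < m" and par: "0 < gl" "0 < gh" "wl < wlt" "wlt \<le> wht" "wht < wh"
    and deriv: "\<And>t. c < t \<Longrightarrow> t \<notin> S \<Longrightarrow> \<exists>x'. (x has_real_derivative x') (at t) \<and>
                   m * x' = alpha_df_comp wl wh wlt wht gl gh (x t) (v t) - v t"
    and t: "c \<le> t"
  shows "x t \<in> {wl..wh}"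
proof -
  have "x t \<le> wh"
  proof (rule le_if_deriv_nonpos_above[OF S cont _ _ t])
    fix s assume s: "c < s" "s \<notin> S" "wh < x s"
    then obtain x' where "(x has_real_derivative x') (at s)"
        "m * x' = alpha_df_comp wl wh wlt wht gl gh (x s) (v s) - v s"
      using deriv by blast
    moreover have "alpha_df_comp wl wh wlt wht gl gh (x s) (v s) < v s"
      using s(3) par by (intro alpha_df_comp_less_above)
    ultimately have "m * x' < 0" by linarith
    then have "x' \<le> 0" using m by (simp add: mult_less_0_iff)
    with \<open>(x has_real_derivative x') (at s)\<close> show "\<exists>d. (x has_real_derivative d) (at s) \<and> d \<le> 0"
      by blast
  qed (use start in auto)
  moreover have "- x t \<le> - wl"
  proof (rule le_if_deriv_nonpos_above[OF S _ _ _ t])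
    show "continuous_on {c..} (\<lambda>s. - x s)" using cont by (intro continuous_intros)
    fix s assume s: "c < s" "s \<notin> S" "- wl < - x s"
    then obtain x' where x': "(x has_real_derivative x') (at s)"
        "m * x' = alpha_df_comp wl wh wlt wht gl gh (x s) (v s) - v s"
      using deriv by blast
    moreover have "v s < alpha_df_comp wl wh wlt wht gl gh (x s) (v s)"
      using s(3) par by (intro alpha_df_comp_greater_below) auto
    ultimately have "0 < m * x'" by linarith
    then have "0 < x'" using m by (simp add: zero_less_mult_iff)
    with x'(1) show "\<exists>d. ((\<lambda>s. - x s) has_real_derivative d) (at s) \<and> d \<le> 0"
      by (intro exI[of _ "- x'"]) (auto intro: DERIV_minus)
  qed (use start in auto)
  ultimately show ?thesis by simp
qed

section \<open>The network equations along solutions\<close>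

lemma abs_sat_le: "0 \<le> \<epsilon> \<Longrightarrow> \<bar>sat \<epsilon> a u\<bar> \<le> \<epsilon> * \<bar>a\<bar>"
  unfolding sat_def by (auto simp: max_def min_def)

lemma sampling_interval_exists:
  fixes \<Delta> :: "nat \<Rightarrow> real"
  assumes "\<Delta> 0 = 0" "filterlim \<Delta> at_top sequentially" "0 \<le> t"
  shows "\<exists>j. \<Delta> j \<le> t \<and> t < \<Delta> (Suc j)"
proof -
  have "\<forall>\<^sub>F n in sequentially. t + 1 \<le> \<Delta> n"
    using assms(2) unfolding filterlim_at_top by blast
  then obtain n where n: "t < \<Delta> n"
    unfolding eventually_sequentially by (metis le_refl less_add_one order_less_le_trans)
  define m where "m = (LEAST n. t < \<Delta> n)"
  have m: "t < \<Delta> m" unfolding m_def using n by (rule LeastI)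
  then have "m \<noteq> 0" using assms(1,3) by (metis not_less)
  then obtain j where j: "m = Suc j" using not0_implies_Suc by blast
  have "\<not> t < \<Delta> j" using j unfolding m_def by (metis lessI not_less_Least)
  then show ?thesis using m j by (intro exI[of _ j]) auto
qed

text \<open>Here u is the power injection plus the top-layer control. The MPC input enters the
  filter state a only through the stability filter, so only the bound
  |sat \<epsilon> a u| \<le> \<epsilon> |a| is retained; in particular the value of the THE-defined
  optimiser is irrelevant.\<close>

definition network_ode_at ::
  "real^'e::finite \<Rightarrow> real^'i::finite^'e \<Rightarrow> real^'i \<Rightarrow> real^'i \<Rightarrow> 'i set \<Rightarrow> ('i \<Rightarrow> real) \<Rightarrow>
   ('i \<Rightarrow> real) \<Rightarrow> real^'i \<Rightarrow> (real \<Rightarrow> real^'e) \<Rightarrow> (real \<Rightarrow> real^'i) \<Rightarrow> (real \<Rightarrow> real^'i) \<Rightarrow> real \<Rightarrow> bool"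
where
  "network_ode_at y D Mv Ev Iu Tc eps u f w a t \<longleftrightarrow>
     (\<forall>e. ((\<lambda>s. f s $ e) has_real_derivative y $ e * (D *v w t) $ e) (at t)) \<and>
     (\<forall>i. \<exists>w'. ((\<lambda>s. w s $ i) has_real_derivative w') (at t) \<and>
          Mv $ i * w' = - Ev $ i * w t $ i - (transpose D *v f t) $ i + u $ i + a t $ i) \<and>
     (\<forall>i\<in>Iu. \<exists>r. \<bar>r\<bar> \<le> eps i * \<bar>a t $ i\<bar> \<and>
          ((\<lambda>s. a s $ i) has_real_derivative - a t $ i / Tc i - w t $ i + r) (at t))"

lemma closed_loop_sol_network_ode:
  assumes sol: "closed_loop_sol y D Mv Ev p Iu Iw T N c eps Tc d wlo whi \<Delta> pf wlt wht gl gh f w aM"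
    and \<Delta>: "\<Delta> 0 = 0" "filterlim \<Delta> at_top sequentially" and eps: "\<And>i. i \<in> Iu \<Longrightarrow> 0 \<le> eps i"
  shows "\<exists>S. locally_finite_set S \<and> (\<forall>t>0. t \<notin> S \<longrightarrow>
           network_ode_at y D Mv Ev Iu Tc eps
             (p t + alpha_df D Ev Iw wlo whi wlt wht gl gh (f t) (w t) (p t) (aM t)) f w aM t)"
proof -
  let ?aDF = "\<lambda>t. alpha_df D Ev Iw wlo whi wlt wht gl gh (f t) (w t) (p t) (aM t)"
  obtain S where S: "locally_finite_set S"
    and dyn: "\<And>t j. 0 \<le> t \<Longrightarrow> t \<notin> S \<Longrightarrow> \<Delta> j \<le> t \<Longrightarrow> t < \<Delta> (Suc j) \<Longrightarrow>
       (let uM = mpc_u T N y D Mv Ev Iu Iw Tc eps wlo whi c d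
                   (\<lambda>k. pf j (\<Delta> j + real k * T)) (f (\<Delta> j)) (w (\<Delta> j)) (aM (\<Delta> j));
            aDF = alpha_df D Ev Iw wlo whi wlt wht gl gh (f t) (w t) (p t) (aM t)
        in (\<forall>e. ((\<lambda>s. f s $ e) has_real_derivative (y $ e * (D *v w t) $ e)) (at t within {0..})) \<and>
           (\<forall>i. \<exists>w'. ((\<lambda>s. w s $ i) has_real_derivative w') (at t within {0..}) \<and>
                 Mv $ i * w' = - Ev $ i * w t $ i - (transpose D *v f t) $ i + p t $ i + (aDF $ i + aM t $ i)) \<and>
           (\<forall>i\<in>Iu. ((\<lambda>s. aM s $ i) has_real_derivative
                 (- aM t $ i / Tc i - w t $ i + sat (eps i) (aM t $ i) (uM $ i))) (at t within {0..})))"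
    using sol unfolding closed_loop_sol_def by blast
  have ode: "network_ode_at y D Mv Ev Iu Tc eps (p t + ?aDF t) f w aM t" if t: "0 < t" "t \<notin> S" for t
  proof -
    obtain j where j: "\<Delta> j \<le> t" "t < \<Delta> (Suc j)"
      using sampling_interval_exists[OF \<Delta> less_imp_le[OF t(1)]] by blast
    let ?uM = "mpc_u T N y D Mv Ev Iu Iw Tc eps wlo whi c d
      (\<lambda>k. pf j (\<Delta> j + real k * T)) (f (\<Delta> j)) (w (\<Delta> j)) (aM (\<Delta> j))"
    note at = has_real_derivative_at_if_within_atLeast[OF t(1)]
    note H = dyn[OF less_imp_le[OF t(1)] t(2) j, unfolded Let_def]
    show ?thesis
      unfolding network_ode_at_def
    proof (intro conjI allI ballI)
      fix e
      show "((\<lambda>s. f s $ e) has_real_derivative y $ e * (D *v w t) $ e) (at t)" using H at by blast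
    next
      fix i
      obtain w' where "((\<lambda>s. w s $ i) has_real_derivative w') (at t within {0..})"
        "Mv $ i * w' = - Ev $ i * w t $ i - (transpose D *v f t) $ i + p t $ i + (?aDF t $ i + aM t $ i)"
        using H by blast
      then show "\<exists>w'. ((\<lambda>s. w s $ i) has_real_derivative w') (at t) \<and>
          Mv $ i * w' = - Ev $ i * w t $ i - (transpose D *v f t) $ i + (p t + ?aDF t) $ i + aM t $ i"
        using at by (intro exI[of _ w']) simp
    next
      fix i assume i: "i \<in> Iu"
      show "\<exists>r. \<bar>r\<bar> \<le> eps i * \<bar>aM t $ i\<bar> \<and>
          ((\<lambda>s. aM s $ i) has_real_derivative - aM t $ i / Tc i - w t $ i + r) (at t)"
      proof (intro exI conjI)
        show "((\<lambda>s. aM s $ i) has_real_derivative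
            - aM t $ i / Tc i - w t $ i + sat (eps i) (aM t $ i) (?uM $ i)) (at t)"
          using H i by (intro at) blast
      qed (rule abs_sat_le[OF eps[OF i]])
    qed
  qed
  show ?thesis by (intro exI[of _ S] conjI S allI impI ode)
qed

lemma open_loop_sol_network_ode:
  assumes "open_loop_sol y D Mv Ev p f w"
  shows "\<exists>S. locally_finite_set S \<and> (\<forall>t>0. t \<notin> S \<longrightarrow> network_ode_at y D Mv Ev {} Tc eps (p t) f w (\<lambda>_. 0) t)"
proof -
  obtain S where S: "locally_finite_set S"
    and dyn: "\<And>t. 0 \<le> t \<Longrightarrow> t \<notin> S \<Longrightarrow>
           (\<forall>e. ((\<lambda>s. f s $ e) has_real_derivative (y $ e * (D *v w t) $ e)) (at t within {0..})) \<and>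
           (\<forall>i. \<exists>w'. ((\<lambda>s. w s $ i) has_real_derivative w') (at t within {0..}) \<and>
                 Mv $ i * w' = - Ev $ i * w t $ i - (transpose D *v f t) $ i + p t $ i)"
    using assms unfolding open_loop_sol_def by blast
  have ode: "network_ode_at y D Mv Ev {} Tc eps (p t) f w (\<lambda>_. 0) t" if t: "0 < t" "t \<notin> S" for t
    unfolding network_ode_at_def
  proof (intro conjI allI ballI)
    note at = has_real_derivative_at_if_within_atLeast[OF t(1)]
    note H = dyn[OF less_imp_le[OF t(1)] t(2)]
    fix e
    show "((\<lambda>s. f s $ e) has_real_derivative y $ e * (D *v w t) $ e) (at t)" using H at by blast
  next
    note at = has_real_derivative_at_if_within_atLeast[OF t(1)]
    note H = dyn[OF less_imp_le[OF t(1)] t(2)]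
    fix i
    obtain w' where "((\<lambda>s. w s $ i) has_real_derivative w') (at t within {0..})"
      "Mv $ i * w' = - Ev $ i * w t $ i - (transpose D *v f t) $ i + p t $ i"
      using H by blast
    then show "\<exists>w'. ((\<lambda>s. w s $ i) has_real_derivative w') (at t) \<and>
        Mv $ i * w' = - Ev $ i * w t $ i - (transpose D *v f t) $ i + p t $ i + 0 $ i"
      using at by (intro exI[of _ w']) simp
  qed simp
  show ?thesis by (intro exI[of _ S] conjI S allI impI ode)
qed

section \<open>Trajectories under dissipative control\<close>

lemma finite_uniform_bound:
  fixes h :: "'i::finite \<Rightarrow> 'x \<Rightarrow> real"
  assumes "\<And>i. \<exists>K. \<forall>x\<in>A. \<bar>h i x\<bar> \<le> K"
  shows "\<exists>K. \<forall>i. \<forall>x\<in>A. \<bar>h i x\<bar> \<le> K"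
proof -
  obtain K where K: "\<And>i. \<forall>x\<in>A. \<bar>h i x\<bar> \<le> K i" using assms by metis
  have "K i \<le> (\<Sum>j\<in>UNIV. \<bar>K j\<bar>)" for i
    using member_le_sum[of i UNIV "\<lambda>j. \<bar>K j\<bar>"] by auto
  then show ?thesis using K by (blast intro: order_trans)
qed

lemma abs_le_1_plus_square: "\<bar>x::real\<bar> \<le> 1 + x\<^sup>2"
proof (cases "\<bar>x\<bar> \<le> 1")
  case False
  then have "\<bar>x\<bar> * 1 \<le> \<bar>x\<bar> * \<bar>x\<bar>" by (intro mult_left_mono) auto
  then show ?thesis by (simp add: power2_eq_square abs_mult_self_eq)
qed (simp add: add_increasing2)

lemma abs_mult_vec_nth_le:
  fixes A :: "real^'j::finite^'k::finite"
  assumes "\<And>j. \<bar>x $ j\<bar> \<le> B"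
  shows "\<bar>(A *v x) $ k\<bar> \<le> (\<Sum>j\<in>UNIV. \<bar>A $ k $ j\<bar> * B)"
  unfolding matrix_vector_mult_def vec_lambda_beta
  by (rule order_trans[OF sum_abs sum_mono]) (auto simp: abs_mult intro!: mult_left_mono assms)

(* a plays the role of alpha_MPC and b that of alpha_DF; of the top layer only the sign
   condition w b <= 0, a growth bound and the dead zone around w = 0 are used. *)
locale network_trajectory =
  fixes D :: "real^'i::finite^'e::finite" and y :: "real^'e" and Mv Ev ps :: "real^'i"
    and Iu :: "'i set" and Tc eps :: "'i \<Rightarrow> real" and fh :: "real^'e" and t0 :: real
    and S :: "real set" and f :: "real \<Rightarrow> real^'e" and w a b :: "real \<Rightarrow> real^'i"
  assumes y_pos: "\<And>e. 0 < y $ e" and M_pos: "\<And>i. 0 < Mv $ i" and E_pos: "\<And>i. 0 < Ev $ i"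
    and Tc_pos: "\<And>i. i \<in> Iu \<Longrightarrow> 0 < Tc i" and eps_nonneg: "\<And>i. i \<in> Iu \<Longrightarrow> 0 \<le> eps i"
    and eps_Tc: "\<And>i. i \<in> Iu \<Longrightarrow> eps i * Tc i < 1"
    and fh: "transpose D *v fh = ps"
    and cont_f: "continuous_on {t0..} f" and cont_w: "continuous_on {t0..} w"
    and cont_a: "continuous_on {t0..} a"
    and a_off: "\<And>t i. t0 \<le> t \<Longrightarrow> i \<notin> Iu \<Longrightarrow> a t $ i = 0"
    and S: "locally_finite_set S"
    and ode: "\<And>t. t0 < t \<Longrightarrow> t \<notin> S \<Longrightarrow> network_ode_at y D Mv Ev Iu Tc eps (ps + b t) f w a t"
    and b_sign: "\<And>t i. t0 \<le> t \<Longrightarrow> w t $ i * b t $ i \<le> 0"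
    and b_bound: "\<And>i. \<exists>G. \<forall>t\<ge>t0.
           \<bar>b t $ i\<bar> \<le> G + \<bar>Ev $ i * w t $ i + (transpose D *v f t) $ i - ps $ i - a t $ i\<bar>"
    and b_dead_zone: "\<And>i. \<exists>\<rho>>0. \<forall>t\<ge>t0. \<bar>w t $ i\<bar> \<le> \<rho> \<longrightarrow> b t $ i = 0"
begin

definition w_rate :: "real \<Rightarrow> 'i \<Rightarrow> real" where
  "w_rate t i = (- Ev $ i * w t $ i - (transpose D *v f t) $ i + ps $ i + b t $ i + a t $ i) / Mv $ i"

lemma M_mult_w_rate:
  "Mv $ i * w_rate t i = - Ev $ i * w t $ i - (transpose D *v f t) $ i + ps $ i + b t $ i + a t $ i"
  using M_pos[of i] unfolding w_rate_def by simp

lemma has_derivative_f: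
  "t0 < t \<Longrightarrow> t \<notin> S \<Longrightarrow> ((\<lambda>s. f s $ e) has_real_derivative y $ e * (D *v w t) $ e) (at t)"
  using ode unfolding network_ode_at_def by blast

lemma has_derivative_w:
  assumes "t0 < t" "t \<notin> S"
  shows "((\<lambda>s. w s $ i) has_real_derivative w_rate t i) (at t)"
proof -
  obtain w' where w': "((\<lambda>s. w s $ i) has_real_derivative w') (at t)"
      "Mv $ i * w' = - Ev $ i * w t $ i - (transpose D *v f t) $ i + (ps + b t) $ i + a t $ i"
    using ode[OF assms] unfolding network_ode_at_def by blast
  have "Mv $ i * w' = Mv $ i * w_rate t i" unfolding w'(2) M_mult_w_rate by simp
  then show ?thesis using w'(1) M_pos[of i] by simp
qed

lemma has_derivative_a:
  "t0 < t \<Longrightarrow> t \<notin> S \<Longrightarrow> i \<in> Iu \<Longrightarrow> \<exists>r. \<bar>r\<bar> \<le> eps i * \<bar>a t $ i\<bar> \<and>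
     ((\<lambda>s. a s $ i) has_real_derivative - a t $ i / Tc i - w t $ i + r) (at t)"
  using ode unfolding network_ode_at_def by blast

lemma has_derivative_transpose_f:
  "t0 < t \<Longrightarrow> t \<notin> S \<Longrightarrow> ((\<lambda>s. (transpose D *v f s) $ i) has_real_derivative
     (\<Sum>e\<in>UNIV. D $ e $ i * (y $ e * (D *v w t) $ e))) (at t)"
  unfolding transpose_mult_vec_nth by (intro DERIV_sum DERIV_cmult has_derivative_f)

definition V :: "real \<Rightarrow> real" where
  "V t = (\<Sum>i\<in>UNIV. Mv $ i * (w t $ i)\<^sup>2 / 2) + (\<Sum>e\<in>UNIV. (f t $ e - fh $ e)\<^sup>2 / (2 * y $ e))
       + (\<Sum>i\<in>Iu. (a t $ i)\<^sup>2 / 2)"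

definition sumsq_wa :: "real \<Rightarrow> real" where
  "sumsq_wa t = (\<Sum>i\<in>UNIV. (w t $ i)\<^sup>2) + (\<Sum>i\<in>Iu. (a t $ i)\<^sup>2)"

definition kappa :: real where
  "kappa = Min (range (\<lambda>i. Ev $ i) \<union> (\<lambda>i. 1 / Tc i - eps i) ` Iu)"

lemma kappa_pos: "0 < kappa"
proof -
  have "0 < 1 / Tc i - eps i" if "i \<in> Iu" for i
    using Tc_pos[OF that] eps_Tc[OF that] by (simp add: field_simps)
  then show ?thesis unfolding kappa_def using E_pos by (subst Min_gr_iff) auto
qed

lemma kappa_le_E: "kappa \<le> Ev $ i"
  unfolding kappa_def by (rule Min_le) auto

lemma kappa_le_filter: "i \<in> Iu \<Longrightarrow> kappa \<le> 1 / Tc i - eps i"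
  unfolding kappa_def by (rule Min_le) auto

lemma sumsq_wa_nonneg: "0 \<le> sumsq_wa t"
  unfolding sumsq_wa_def by (intro add_nonneg_nonneg sum_nonneg) auto

lemma continuous_on_V: "continuous_on {t0..} V"
  unfolding V_def by (intro continuous_intros cont_f cont_w cont_a) (use y_pos in \<open>auto simp: less_le\<close>)

lemma V_ge_terms:
  shows V_ge_w: "Mv $ i * (w t $ i)\<^sup>2 / 2 \<le> V t"
    and V_ge_f: "(f t $ e - fh $ e)\<^sup>2 / (2 * y $ e) \<le> V t"
    and V_ge_a: "j \<in> Iu \<Longrightarrow> (a t $ j)\<^sup>2 / 2 \<le> V t"
proof -
  have nonneg: "0 \<le> Mv $ k * (w t $ k)\<^sup>2 / 2" "0 \<le> (f t $ d - fh $ d)\<^sup>2 / (2 * y $ d)"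
    "0 \<le> (a t $ k)\<^sup>2 / 2" for k d
    using M_pos[of k] y_pos[of d] by auto
  have "Mv $ i * (w t $ i)\<^sup>2 / 2 \<le> (\<Sum>i\<in>UNIV. Mv $ i * (w t $ i)\<^sup>2 / 2)"
    "(f t $ e - fh $ e)\<^sup>2 / (2 * y $ e) \<le> (\<Sum>e\<in>UNIV. (f t $ e - fh $ e)\<^sup>2 / (2 * y $ e))"
    "j \<in> Iu \<Longrightarrow> (a t $ j)\<^sup>2 / 2 \<le> (\<Sum>i\<in>Iu. (a t $ i)\<^sup>2 / 2)"
    by (rule member_le_sum; use nonneg in auto)+
  moreover have "0 \<le> (\<Sum>i\<in>UNIV. Mv $ i * (w t $ i)\<^sup>2 / 2)"
    "0 \<le> (\<Sum>e\<in>UNIV. (f t $ e - fh $ e)\<^sup>2 / (2 * y $ e))" "0 \<le> (\<Sum>i\<in>Iu. (a t $ i)\<^sup>2 / 2)"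
    by (rule sum_nonneg; use nonneg in auto)+
  ultimately show "Mv $ i * (w t $ i)\<^sup>2 / 2 \<le> V t" "(f t $ e - fh $ e)\<^sup>2 / (2 * y $ e) \<le> V t"
    "j \<in> Iu \<Longrightarrow> (a t $ j)\<^sup>2 / 2 \<le> V t"
    unfolding V_def by linarith+
qed

lemma V_nonneg: "0 \<le> V t"
  using V_ge_w[of i t] M_pos[of i] by (smt (verit) zero_le_power2 mult_nonneg_nonneg divide_nonneg_pos)

(* Along the flow, (f - fh) . D w = w . (D^T f - ps) cancels the coupling term of the
   frequency equation, and the w-a coupling terms cancel as well. *)
lemma V_has_derivative:
  assumes t: "t0 < t" "t \<notin> S"
    and r: "\<And>i. i \<in> Iu \<Longrightarrow> ((\<lambda>s. a s $ i) has_real_derivative - a t $ i / Tc i - w t $ i + r i) (at t)"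
  shows "(V has_real_derivative (\<Sum>i\<in>UNIV. w t $ i * (- Ev $ i * w t $ i + b t $ i))
           + (\<Sum>i\<in>Iu. a t $ i * (- a t $ i / Tc i + r i))) (at t)"
proof -
  have "((\<lambda>s. \<Sum>i\<in>UNIV. Mv $ i * (w s $ i)\<^sup>2 / 2) has_real_derivative
      (\<Sum>i\<in>UNIV. w t $ i * (Mv $ i * w_rate t i))) (at t)"
    by (rule DERIV_sum) (auto intro!: derivative_eq_intros has_derivative_w[OF t])
  moreover have "((\<lambda>s. \<Sum>e\<in>UNIV. (f s $ e - fh $ e)\<^sup>2 / (2 * y $ e)) has_real_derivative
      (\<Sum>e\<in>UNIV. (f t $ e - fh $ e) * (D *v w t) $ e)) (at t)"
    by (rule DERIV_sum) (use y_pos in \<open>auto intro!: derivative_eq_intros has_derivative_f[OF t]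
      simp: less_imp_neq[OF y_pos, symmetric]\<close>)
  moreover have "((\<lambda>s. \<Sum>i\<in>Iu. (a s $ i)\<^sup>2 / 2) has_real_derivative
      (\<Sum>i\<in>Iu. a t $ i * (- a t $ i / Tc i - w t $ i + r i))) (at t)"
    by (rule DERIV_sum) (auto intro!: derivative_eq_intros r)
  ultimately have dV: "(V has_real_derivative (\<Sum>i\<in>UNIV. w t $ i * (Mv $ i * w_rate t i))
       + (\<Sum>e\<in>UNIV. (f t $ e - fh $ e) * (D *v w t) $ e)
       + (\<Sum>i\<in>Iu. a t $ i * (- a t $ i / Tc i - w t $ i + r i))) (at t)"
    unfolding V_def[abs_def] by (intro DERIV_add)
  have flow: "(\<Sum>e\<in>UNIV. (f t $ e - fh $ e) * (D *v w t) $ e)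
      = (\<Sum>i\<in>UNIV. w t $ i * ((transpose D *v f t) $ i - ps $ i))"
    using sum_mult_mult_vec_eq_sum_transpose[of "f t - fh" D "w t"]
    by (simp only: matrix_vector_mult_diff_distrib fh vector_minus_component)
  have coupling: "(\<Sum>i\<in>UNIV. w t $ i * a t $ i) = (\<Sum>i\<in>Iu. w t $ i * a t $ i)"
    by (rule sum.mono_neutral_right) (use a_off t in auto)
  have "(\<Sum>i\<in>UNIV. w t $ i * (Mv $ i * w_rate t i))
       + (\<Sum>e\<in>UNIV. (f t $ e - fh $ e) * (D *v w t) $ e)
       + (\<Sum>i\<in>Iu. a t $ i * (- a t $ i / Tc i - w t $ i + r i))
     = (\<Sum>i\<in>UNIV. w t $ i * (- Ev $ i * w t $ i + b t $ i)) + (\<Sum>i\<in>UNIV. w t $ i * a t $ i)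
       - (\<Sum>i\<in>UNIV. w t $ i * ((transpose D *v f t) $ i - ps $ i))
       + (\<Sum>e\<in>UNIV. (f t $ e - fh $ e) * (D *v w t) $ e)
       + (\<Sum>i\<in>Iu. a t $ i * (- a t $ i / Tc i + r i)) - (\<Sum>i\<in>Iu. w t $ i * a t $ i)"
    unfolding M_mult_w_rate by (simp add: sum_subtractf[symmetric] sum.distrib[symmetric] algebra_simps)
  also have "\<dots> = (\<Sum>i\<in>UNIV. w t $ i * (- Ev $ i * w t $ i + b t $ i))
       + (\<Sum>i\<in>Iu. a t $ i * (- a t $ i / Tc i + r i))"
    unfolding flow coupling by simp
  finally show ?thesis using dV by simp
qed

lemma V_has_derivative_le:
  assumes t: "t0 < t" "t \<notin> S"
  shows "\<exists>d. (V has_real_derivative d) (at t) \<and> d \<le> - kappa * sumsq_wa t"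
proof -
  have "\<forall>i. \<exists>r. i \<in> Iu \<longrightarrow> \<bar>r\<bar> \<le> eps i * \<bar>a t $ i\<bar> \<and>
        ((\<lambda>s. a s $ i) has_real_derivative - a t $ i / Tc i - w t $ i + r) (at t)"
    using has_derivative_a[OF t] by blast
  then obtain r where r: "\<And>i. i \<in> Iu \<Longrightarrow> \<bar>r i\<bar> \<le> eps i * \<bar>a t $ i\<bar>"
    "\<And>i. i \<in> Iu \<Longrightarrow> ((\<lambda>s. a s $ i) has_real_derivative - a t $ i / Tc i - w t $ i + r i) (at t)"
    by metis
  have "(\<Sum>i\<in>UNIV. w t $ i * (- Ev $ i * w t $ i + b t $ i)) + (\<Sum>i\<in>Iu. a t $ i * (- a t $ i / Tc i + r i))
      \<le> (\<Sum>i\<in>UNIV. - kappa * (w t $ i)\<^sup>2) + (\<Sum>i\<in>Iu. - kappa * (a t $ i)\<^sup>2)"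
  proof (rule add_mono; rule sum_mono)
    fix i
    have "kappa * (w t $ i)\<^sup>2 \<le> Ev $ i * (w t $ i)\<^sup>2" using kappa_le_E by (intro mult_right_mono) auto
    then show "w t $ i * (- Ev $ i * w t $ i + b t $ i) \<le> - kappa * (w t $ i)\<^sup>2"
      using b_sign[of t i] t by (simp add: algebra_simps power2_eq_square)
  next
    fix i assume i: "i \<in> Iu"
    have "a t $ i * r i \<le> \<bar>a t $ i\<bar> * \<bar>r i\<bar>" by (metis abs_ge_self abs_mult)
    also have "\<dots> \<le> \<bar>a t $ i\<bar> * (eps i * \<bar>a t $ i\<bar>)" using r(1)[OF i] by (intro mult_left_mono) auto
    also have "\<dots> = eps i * (a t $ i)\<^sup>2" by (simp add: power2_eq_square abs_mult_self_eq)
    finally have "a t $ i * r i \<le> eps i * (a t $ i)\<^sup>2" .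
    moreover have "kappa * (a t $ i)\<^sup>2 \<le> (1 / Tc i - eps i) * (a t $ i)\<^sup>2"
      using kappa_le_filter[OF i] by (intro mult_right_mono) auto
    ultimately show "a t $ i * (- a t $ i / Tc i + r i) \<le> - kappa * (a t $ i)\<^sup>2"
      by (simp add: algebra_simps power2_eq_square)
  qed
  also have "\<dots> = - kappa * sumsq_wa t"
    unfolding sumsq_wa_def by (simp add: sum_distrib_left[symmetric] algebra_simps sum_negf)
  finally show ?thesis using V_has_derivative[OF t r(2)] by blast
qed

lemma V_decrease:
  assumes "t0 \<le> s" "s \<le> t" "\<And>x. s < x \<Longrightarrow> x < t \<Longrightarrow> c \<le> sumsq_wa x"
  shows "V t - V s \<le> - kappa * c * (t - s)"
proof (rule increment_le_if_deriv_le[OF S assms(2)])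
  show "continuous_on {s..t} V" using continuous_on_V by (rule continuous_on_subset) (use assms in auto)
  fix x assume x: "s < x" "x < t" "x \<notin> S"
  then obtain d where "(V has_real_derivative d) (at x)" "d \<le> - kappa * sumsq_wa x"
    using V_has_derivative_le[of x] assms(1) by force
  moreover have "kappa * c \<le> kappa * sumsq_wa x"
    using kappa_pos assms(3)[OF x(1,2)] by (intro mult_left_mono) auto
  ultimately show "\<exists>d. (V has_real_derivative d) (at x) \<and> d \<le> - kappa * c" by force
qed

lemma V_le_initial: "t0 \<le> t \<Longrightarrow> V t \<le> V t0"
  using V_decrease[of t0 t 0] sumsq_wa_nonneg by force

lemma w_bounded: "\<exists>B. \<forall>i. \<forall>t\<in>{t0..}. \<bar>w t $ i\<bar> \<le> B"
proof (rule finite_uniform_bound)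
  fix i
  have "\<bar>w t $ i\<bar> \<le> 1 + 2 * V t0 / Mv $ i" if "t \<in> {t0..}" for t
  proof -
    have "Mv $ i * (w t $ i)\<^sup>2 \<le> 2 * V t0" using V_ge_w[of i t] V_le_initial[of t] that by auto
    then have "(w t $ i)\<^sup>2 \<le> 2 * V t0 / Mv $ i" using M_pos[of i] by (simp add: field_simps)
    then show ?thesis using abs_le_1_plus_square[of "w t $ i"] by linarith
  qed
  then show "\<exists>K. \<forall>t\<in>{t0..}. \<bar>w t $ i\<bar> \<le> K" by blast
qed

lemma a_bounded: "\<exists>B. \<forall>i. \<forall>t\<in>{t0..}. \<bar>a t $ i\<bar> \<le> B"
proof (rule finite_uniform_bound)
  fix i
  have "\<bar>a t $ i\<bar> \<le> 1 + 2 * V t0" if "t \<in> {t0..}" for t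
  proof (cases "i \<in> Iu")
    case True
    have "(a t $ i)\<^sup>2 \<le> 2 * V t0" using V_ge_a[OF True, of t] V_le_initial[of t] that by auto
    then show ?thesis using abs_le_1_plus_square[of "a t $ i"] by linarith
  next
    case False
    then show ?thesis using a_off[of t i] that V_nonneg[of t0] by auto
  qed
  then show "\<exists>K. \<forall>t\<in>{t0..}. \<bar>a t $ i\<bar> \<le> K" by blast
qed

lemma f_bounded: "\<exists>B. \<forall>e. \<forall>t\<in>{t0..}. \<bar>f t $ e\<bar> \<le> B"
proof (rule finite_uniform_bound)
  fix e
  have "\<bar>f t $ e\<bar> \<le> \<bar>fh $ e\<bar> + 1 + 2 * y $ e * V t0" if "t \<in> {t0..}" for t
  proof -
    have "(f t $ e - fh $ e)\<^sup>2 \<le> 2 * y $ e * V t"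
      using V_ge_f[of t e] y_pos[of e] by (simp add: field_simps)
    also have "\<dots> \<le> 2 * y $ e * V t0"
      using V_le_initial[of t] that y_pos[of e] by (intro mult_left_mono) auto
    finally have "\<bar>f t $ e - fh $ e\<bar> \<le> 1 + 2 * y $ e * V t0"
      using abs_le_1_plus_square[of "f t $ e - fh $ e"] by linarith
    then show ?thesis by linarith
  qed
  then show "\<exists>K. \<forall>t\<in>{t0..}. \<bar>f t $ e\<bar> \<le> K" by blast
qed

lemma transpose_f_bounded: "\<exists>B. \<forall>i. \<forall>t\<in>{t0..}. \<bar>(transpose D *v f t) $ i\<bar> \<le> B"
proof (rule finite_uniform_bound)
  fix i
  obtain B where "\<forall>e. \<forall>t\<in>{t0..}. \<bar>f t $ e\<bar> \<le> B" using f_bounded by blast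
  then have "\<bar>(transpose D *v f t) $ i\<bar> \<le> (\<Sum>e\<in>UNIV. \<bar>transpose D $ i $ e\<bar> * B)" if "t \<in> {t0..}" for t
    using that by (intro abs_mult_vec_nth_le) blast
  then show "\<exists>K. \<forall>t\<in>{t0..}. \<bar>(transpose D *v f t) $ i\<bar> \<le> K" by blast
qed

lemma w_lipschitz: "\<exists>K>0. \<forall>s t. t0 \<le> s \<longrightarrow> s \<le> t \<longrightarrow> \<bar>w t $ i - w s $ i\<bar> \<le> K * (t - s)"
proof -
  obtain Bw Ba C where B: "\<forall>i. \<forall>t\<in>{t0..}. \<bar>w t $ i\<bar> \<le> Bw" "\<forall>i. \<forall>t\<in>{t0..}. \<bar>a t $ i\<bar> \<le> Ba"
      "\<forall>i. \<forall>t\<in>{t0..}. \<bar>(transpose D *v f t) $ i\<bar> \<le> C"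
    using w_bounded a_bounded transpose_f_bounded by blast
  obtain G where G: "\<forall>t\<ge>t0. \<bar>b t $ i\<bar> \<le> G + \<bar>Ev $ i * w t $ i + (transpose D *v f t) $ i - ps $ i - a t $ i\<bar>"
    using b_bound by blast
  define X where "X = Ev $ i * Bw + C + \<bar>ps $ i\<bar> + Ba"
  show ?thesis
  proof (rule lipschitz_if_abs_deriv_le[OF S])
    show "continuous_on {t0..} (\<lambda>s. w s $ i)" by (intro continuous_intros cont_w)
    fix x assume x: "t0 < x" "x \<notin> S"
    then have Bx: "\<bar>w x $ i\<bar> \<le> Bw" "\<bar>a x $ i\<bar> \<le> Ba" "\<bar>(transpose D *v f x) $ i\<bar> \<le> C"
      "\<bar>b x $ i\<bar> \<le> G + \<bar>Ev $ i * w x $ i + (transpose D *v f x) $ i - ps $ i - a x $ i\<bar>"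
      using B G by auto
    have "\<bar>Ev $ i * w x $ i\<bar> \<le> Ev $ i * Bw"
      using Bx(1) E_pos[of i] by (simp add: abs_mult mult_left_mono)
    then have "\<bar>Mv $ i * w_rate x i\<bar> \<le> 2 * X + G"
      unfolding M_mult_w_rate X_def using Bx by (smt (verit) minus_mult_left[of "Ev $ i" "w x $ i"])
    then have "\<bar>w_rate x i\<bar> \<le> (2 * X + G) / Mv $ i" using M_pos[of i] by (simp add: abs_mult field_simps)
    then show "\<exists>d. ((\<lambda>s. w s $ i) has_real_derivative d) (at x) \<and> \<bar>d\<bar> \<le> (2 * X + G) / Mv $ i"
      using has_derivative_w[OF x] by blast
  qed
qed

lemma a_lipschitz: "\<exists>K>0. \<forall>s t. t0 \<le> s \<longrightarrow> s \<le> t \<longrightarrow> \<bar>a t $ i - a s $ i\<bar> \<le> K * (t - s)"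
proof (cases "i \<in> Iu")
  case False
  then show ?thesis using a_off by (intro exI[of _ 1]) auto
next
  case True
  obtain Bw Ba where B: "\<forall>i. \<forall>t\<in>{t0..}. \<bar>w t $ i\<bar> \<le> Bw" "\<forall>i. \<forall>t\<in>{t0..}. \<bar>a t $ i\<bar> \<le> Ba"
    using w_bounded a_bounded by blast
  show ?thesis
  proof (rule lipschitz_if_abs_deriv_le[OF S])
    show "continuous_on {t0..} (\<lambda>s. a s $ i)" by (intro continuous_intros cont_a)
    fix x assume x: "t0 < x" "x \<notin> S"
    then have Bx: "\<bar>w x $ i\<bar> \<le> Bw" "\<bar>a x $ i\<bar> \<le> Ba" using B by auto
    obtain r where r: "\<bar>r\<bar> \<le> eps i * \<bar>a x $ i\<bar>"
       "((\<lambda>s. a s $ i) has_real_derivative - a x $ i / Tc i - w x $ i + r) (at x)"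
      using has_derivative_a[OF x True] by blast
    have "\<bar>a x $ i / Tc i\<bar> \<le> Ba / Tc i"
      using Bx(2) Tc_pos[OF True] by (simp add: abs_divide divide_right_mono)
    moreover have "eps i * \<bar>a x $ i\<bar> \<le> eps i * Ba"
      using Bx(2) eps_nonneg[OF True] by (intro mult_left_mono) auto
    ultimately have "\<bar>- a x $ i / Tc i - w x $ i + r\<bar> \<le> Ba / Tc i + Bw + eps i * Ba"
      using Bx(1) r(1) by (smt (verit) minus_divide_left[of "a x $ i" "Tc i"])
    with r(2) show "\<exists>d. ((\<lambda>s. a s $ i) has_real_derivative d) (at x) \<and> \<bar>d\<bar> \<le> Ba / Tc i + Bw + eps i * Ba"
      by blast
  qed
qed

lemma transpose_f_lipschitz:
  "\<exists>K>0. \<forall>s t. t0 \<le> s \<longrightarrow> s \<le> t \<longrightarrow> \<bar>(transpose D *v f t) $ i - (transpose D *v f s) $ i\<bar> \<le> K * (t - s)"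
proof -
  obtain B where B: "\<forall>i. \<forall>t\<in>{t0..}. \<bar>w t $ i\<bar> \<le> B" using w_bounded by blast
  show ?thesis
  proof (rule lipschitz_if_abs_deriv_le[OF S])
    show "continuous_on {t0..} (\<lambda>s. (transpose D *v f s) $ i)"
      unfolding transpose_mult_vec_nth by (intro continuous_intros cont_f)
    fix x assume x: "t0 < x" "x \<notin> S"
    have "\<bar>\<Sum>e\<in>UNIV. D $ e $ i * (y $ e * (D *v w x) $ e)\<bar>
        \<le> (\<Sum>e\<in>UNIV. \<bar>D $ e $ i\<bar> * (y $ e * (\<Sum>j\<in>UNIV. \<bar>D $ e $ j\<bar> * B)))"
    proof (rule order_trans[OF sum_abs sum_mono])
      fix e
      have "\<bar>(D *v w x) $ e\<bar> \<le> (\<Sum>j\<in>UNIV. \<bar>D $ e $ j\<bar> * B)"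
        using B x by (intro abs_mult_vec_nth_le) auto
      then show "\<bar>D $ e $ i * (y $ e * (D *v w x) $ e)\<bar> \<le> \<bar>D $ e $ i\<bar> * (y $ e * (\<Sum>j\<in>UNIV. \<bar>D $ e $ j\<bar> * B))"
        using y_pos[of e] by (auto simp: abs_mult intro!: mult_left_mono)
    qed
    with has_derivative_transpose_f[OF x]
    show "\<exists>d. ((\<lambda>s. (transpose D *v f s) $ i) has_real_derivative d) (at x) \<and>
        \<bar>d\<bar> \<le> (\<Sum>e\<in>UNIV. \<bar>D $ e $ i\<bar> * (y $ e * (\<Sum>j\<in>UNIV. \<bar>D $ e $ j\<bar> * B)))"
      by blast
  qed
qed

lemma tendsto_0_if_dominated:
  assumes "\<exists>K>0. \<forall>s t. t0 \<le> s \<longrightarrow> s \<le> t \<longrightarrow> \<bar>q t - q s\<bar> \<le> K * (t - s)"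
    and "\<And>t. t0 \<le> t \<Longrightarrow> (q t)\<^sup>2 \<le> sumsq_wa t"
  shows "(q \<longlongrightarrow> 0) at_top"
proof -
  obtain K where "0 < K" "\<And>s t. t0 \<le> s \<Longrightarrow> s \<le> t \<Longrightarrow> \<bar>q t - q s\<bar> \<le> K * (t - s)"
    using assms(1) by blast
  then show ?thesis
  proof (rule barbalat_dissipation_tendsto_0[where V = V and B = 0 and \<kappa> = kappa])
    fix s t c assume "t0 \<le> s" "s \<le> t" and c: "\<And>x. s < x \<Longrightarrow> x < t \<Longrightarrow> c \<le> (q x)\<^sup>2"
    then show "V t - V s \<le> - kappa * c * (t - s)"
      by (intro V_decrease) (auto intro: order_trans[OF c assms(2)])
  qed (use V_nonneg kappa_pos in auto)
qed

lemma w_tendsto_0: "(w \<longlongrightarrow> 0) at_top"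
proof (rule vec_tendstoI)
  fix i
  have "((\<lambda>t. w t $ i) \<longlongrightarrow> 0) at_top"
  proof (rule tendsto_0_if_dominated[OF w_lipschitz])
    fix t
    have "(w t $ i)\<^sup>2 \<le> (\<Sum>i\<in>UNIV. (w t $ i)\<^sup>2)" by (rule member_le_sum) auto
    moreover have "0 \<le> (\<Sum>i\<in>Iu. (a t $ i)\<^sup>2)" by (intro sum_nonneg) auto
    ultimately show "(w t $ i)\<^sup>2 \<le> sumsq_wa t" unfolding sumsq_wa_def by linarith
  qed
  then show "((\<lambda>t. w t $ i) \<longlongrightarrow> 0 $ i) at_top" by simp
qed

lemma a_tendsto_0: "(a \<longlongrightarrow> 0) at_top"
proof (rule vec_tendstoI)
  fix i
  have "((\<lambda>t. a t $ i) \<longlongrightarrow> 0) at_top"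
  proof (cases "i \<in> Iu")
    case True
    show ?thesis
    proof (rule tendsto_0_if_dominated[OF a_lipschitz])
      fix t
      have "(a t $ i)\<^sup>2 \<le> (\<Sum>i\<in>Iu. (a t $ i)\<^sup>2)" by (rule member_le_sum) (use True in auto)
      moreover have "0 \<le> (\<Sum>i\<in>UNIV. (w t $ i)\<^sup>2)" by (intro sum_nonneg) auto
      ultimately show "(a t $ i)\<^sup>2 \<le> sumsq_wa t" unfolding sumsq_wa_def by linarith
    qed
  next
    case False
    have "\<forall>\<^sub>F t in at_top. a t $ i = 0"
      unfolding eventually_at_top_linorder using a_off False by blast
    then show ?thesis by (rule tendsto_eventually)
  qed
  then show "((\<lambda>t. a t $ i) \<longlongrightarrow> 0 $ i) at_top" by simp
qed

lemma b_eventually_0: "\<forall>\<^sub>F t in at_top. b t = 0"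
proof -
  have "\<forall>\<^sub>F t in at_top. b t $ i = 0" for i
  proof -
    obtain \<rho> where \<rho>: "0 < \<rho>" "\<forall>t\<ge>t0. \<bar>w t $ i\<bar> \<le> \<rho> \<longrightarrow> b t $ i = 0"
      using b_dead_zone by blast
    have "\<forall>\<^sub>F t in at_top. \<bar>w t $ i\<bar> < \<rho>"
      using tendsto_vec_nth[OF w_tendsto_0, of i] \<rho>(1) by (auto simp: tendsto_iff dist_real_def)
    with eventually_ge_at_top[of t0] show ?thesis
      by eventually_elim (use \<rho>(2) in auto)
  qed
  then show ?thesis by (simp add: vec_eq_iff eventually_all_finite)
qed

lemma b_tendsto_0: "(b \<longlongrightarrow> 0) at_top"
  using b_eventually_0 by (rule tendsto_eventually)

(* Once b has vanished, M w' = (ps - D^T f) + (a - E w) with w, a -> 0; since D^T f is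
   Lipschitz, Barbalat's lemma forces the first term to vanish. *)
lemma transpose_f_tendsto: "((\<lambda>t. (transpose D *v f t) $ i) \<longlongrightarrow> ps $ i) at_top"
proof -
  define g where "g t = (ps $ i - (transpose D *v f t) $ i) / Mv $ i" for t
  define r where "r t = (b t $ i + a t $ i - Ev $ i * w t $ i) / Mv $ i" for t
  obtain K where K: "0 < K" "\<And>s t. t0 \<le> s \<Longrightarrow> s \<le> t \<Longrightarrow>
      \<bar>(transpose D *v f t) $ i - (transpose D *v f s) $ i\<bar> \<le> K * (t - s)"
    using transpose_f_lipschitz[of i] by blast
  have "(g \<longlongrightarrow> 0) at_top"
  proof (rule barbalat_deriv_tendsto_0[OF S _ _ _ divide_pos_pos[OF K(1) M_pos[of i]]])
    show "continuous_on {t0..} (\<lambda>t. w t $ i)" by (intro continuous_intros cont_w)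
    show "((\<lambda>t. w t $ i) \<longlongrightarrow> 0) at_top" using tendsto_vec_nth[OF w_tendsto_0, of i] by simp
    have "((\<lambda>t. (b t $ i + a t $ i - Ev $ i * w t $ i) / Mv $ i) \<longlongrightarrow> (0 + 0 - Ev $ i * 0) / Mv $ i) at_top"
      using tendsto_vec_nth[OF b_tendsto_0, of i] tendsto_vec_nth[OF a_tendsto_0, of i]
        tendsto_vec_nth[OF w_tendsto_0, of i] M_pos[of i] by (intro tendsto_intros) auto
    then show "(r \<longlongrightarrow> 0) at_top" unfolding r_def by simp
    fix s t assume st: "t0 \<le> s" "s \<le> t"
    have "\<bar>g t - g s\<bar> = \<bar>(transpose D *v f t) $ i - (transpose D *v f s) $ i\<bar> / Mv $ i"
      unfolding g_def using M_pos[of i] by (simp add: abs_divide diff_divide_distrib[symmetric] abs_minus_commute)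
    also have "\<dots> \<le> K * (t - s) / Mv $ i"
      using K(2)[OF st] M_pos[of i] by (intro divide_right_mono) auto
    finally show "\<bar>g t - g s\<bar> \<le> K / Mv $ i * (t - s)" by simp
  next
    fix t assume t: "t0 < t" "t \<notin> S"
    have "w_rate t i = g t + r t"
      unfolding w_rate_def g_def r_def by (simp add: add_divide_distrib[symmetric] algebra_simps)
    with has_derivative_w[OF t, of i] show "((\<lambda>t. w t $ i) has_real_derivative g t + r t) (at t)"
      by simp
  qed
  then have "((\<lambda>t. ps $ i - Mv $ i * g t) \<longlongrightarrow> ps $ i - Mv $ i * 0) at_top"
    by (intro tendsto_intros)
  moreover have "(\<lambda>t. ps $ i - Mv $ i * g t) = (\<lambda>t. (transpose D *v f t) $ i)"
    unfolding g_def using M_pos[of i] by (simp add: fun_eq_iff)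
  ultimately show ?thesis by (metis diff_zero mult_zero_right)
qed

lemma transpose_cluster_point:
  assumes "filterlim \<tau> at_top F" "F \<noteq> bot" "((\<lambda>n. f (\<tau> n)) \<longlongrightarrow> L) F"
  shows "transpose D *v L = ps"
proof (rule vec_eq_iff[THEN iffD2], rule allI)
  fix i
  have "((\<lambda>n. (transpose D *v f (\<tau> n)) $ i) \<longlongrightarrow> ps $ i) F"
    using filterlim_compose[OF transpose_f_tendsto assms(1)] by simp
  moreover have "((\<lambda>n. (transpose D *v f (\<tau> n)) $ i) \<longlongrightarrow> (transpose D *v L) $ i) F"
    unfolding transpose_mult_vec_nth by (intro tendsto_intros assms(3))
  ultimately show "(transpose D *v L) $ i = ps $ i" using tendsto_unique assms(2) by blast
qed

lemma f_converges: "\<exists>L. (f \<longlongrightarrow> L) at_top \<and> transpose D *v L = ps"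
proof -
  obtain B where B: "\<forall>e. \<forall>t\<in>{t0..}. \<bar>f t $ e\<bar> \<le> B" using f_bounded by blast
  have "norm (f t) \<le> (\<Sum>e\<in>(UNIV::'e set). B)" if "t \<in> {t0..}" for t
    using norm_le_l1_cart[of "f t"] sum_mono[of UNIV "\<lambda>e. \<bar>f t $ e\<bar>" "\<lambda>e. B"] B that by auto
  then have "bounded (f ` {t0..})" unfolding bounded_iff by blast
  then obtain L where L: "(f \<longlongrightarrow> L) at_top"
  proof (rule tendsto_at_top_if_cluster_points_unique[THEN exE])
    fix \<tau>1 \<tau>2 L1 L2
    assume \<tau>1: "filterlim \<tau>1 at_top sequentially" "(\<lambda>n. f (\<tau>1 n)) \<longlonglongrightarrow> L1"
      and \<tau>2: "filterlim \<tau>2 at_top sequentially" "(\<lambda>n. f (\<tau>2 n)) \<longlonglongrightarrow> L2"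
    define \<delta> where "\<delta> = L1 - L2"
    have ker: "transpose D *v \<delta> = 0"
      unfolding \<delta>_def matrix_vector_mult_diff_distrib
      using transpose_cluster_point[OF \<tau>1(1) _ \<tau>1(2)] transpose_cluster_point[OF \<tau>2(1) _ \<tau>2(2)] by simp
    have "(\<Sum>e\<in>UNIV. L $ e * \<delta> $ e / y $ e) = (\<Sum>e\<in>UNIV. f t0 $ e * \<delta> $ e / y $ e)"
      if "filterlim \<tau> at_top sequentially" "(\<lambda>n. f (\<tau> n)) \<longlonglongrightarrow> L" for \<tau> L
      using weighted_flow_component_conserved_limit[OF S cont_f has_derivative_f ker _ that(1) _ that(2)]
        y_pos by (simp add: less_imp_neq[symmetric])
    from this[OF \<tau>1] this[OF \<tau>2]
    have "(\<Sum>e\<in>UNIV. L1 $ e * \<delta> $ e / y $ e - L2 $ e * \<delta> $ e / y $ e) = 0"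
      by (simp add: sum_subtractf)
    moreover have "L1 $ e * \<delta> $ e / y $ e - L2 $ e * \<delta> $ e / y $ e = \<delta> $ e * \<delta> $ e / y $ e" for e
      unfolding \<delta>_def by (simp add: diff_divide_distrib[symmetric] left_diff_distrib[symmetric])
    ultimately have "(\<Sum>e\<in>UNIV. \<delta> $ e * \<delta> $ e / y $ e) = 0" by simp
    then have "\<delta> = 0" by (rule vec_eq_0_if_weighted_sumsq_eq_0[OF y_pos])
    then show "L1 = L2" unfolding \<delta>_def by simp
  qed
  with transpose_cluster_point[of "\<lambda>t. t" at_top L] show ?thesis
    by (auto simp: filterlim_ident)
qed

end

section \<open>The two-layer closed loop\<close>

locale two_layer_closed_loop =
  fixes D :: "real^'i::finite^'e::finite" and y :: "real^'e" and Mv Ev :: "real^'i"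
    and Iu Iw :: "'i set" and Tc eps wlo whi wlt wht gl gh :: "'i \<Rightarrow> real"
    and p :: "real \<Rightarrow> real^'i" and pstar :: "real^'i" and tbar :: real and fh :: "real^'e"
    and S :: "real set" and f :: "real \<Rightarrow> real^'e" and w aM :: "real \<Rightarrow> real^'i"
  assumes y_pos: "\<And>e. 0 < y $ e" and M_pos: "\<And>i. 0 < Mv $ i" and E_pos: "\<And>i. 0 < Ev $ i"
    and Tc_pos: "\<And>i. i \<in> Iu \<Longrightarrow> 0 < Tc i" and eps_nonneg: "\<And>i. i \<in> Iu \<Longrightarrow> 0 \<le> eps i"
    and eps_Tc: "\<And>i. i \<in> Iu \<Longrightarrow> eps i * Tc i < 1"
    and thresholds: "\<And>i. i \<in> Iw \<Longrightarrow>
           0 < gh i \<and> 0 < gl i \<and> wlo i < wlt i \<and> wlt i < 0 \<and> 0 < wht i \<and> wht i < whi i"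
    and tbar: "0 \<le> tbar" and p_const: "\<And>t. tbar \<le> t \<Longrightarrow> p t = pstar"
    and fh: "transpose D *v fh = pstar"
    and cont_f: "continuous_on {0..} f" and cont_w: "continuous_on {0..} w"
    and cont_aM: "continuous_on {0..} aM"
    and aM_off: "\<And>t i. 0 \<le> t \<Longrightarrow> i \<notin> Iu \<Longrightarrow> aM t $ i = 0"
    and S: "locally_finite_set S"
    and ode: "\<And>t. 0 < t \<Longrightarrow> t \<notin> S \<Longrightarrow> network_ode_at y D Mv Ev Iu Tc eps
           (p t + alpha_df D Ev Iw wlo whi wlt wht gl gh (f t) (w t) (p t) (aM t)) f w aM t"
begin

abbreviation aDF :: "real \<Rightarrow> real^'i" where
  "aDF t \<equiv> alpha_df D Ev Iw wlo whi wlt wht gl gh (f t) (w t) (p t) (aM t)"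

lemma aDF_nth:
  "aDF t $ i = (if i \<in> Iw then alpha_df_comp (wlo i) (whi i) (wlt i) (wht i) (gl i) (gh i) (w t $ i)
      (Ev $ i * w t $ i + (transpose D *v f t) $ i - p t $ i - aM t $ i) else 0)"
  unfolding alpha_df_def by simp

lemma frequency_invariant:
  assumes i: "i \<in> Iw" and start: "w 0 $ i \<in> {wlo i..whi i}" and t: "0 \<le> t"
  shows "w t $ i \<in> {wlo i..whi i}"
proof (rule alpha_df_comp_forward_invariant
    [where x = "\<lambda>s. w s $ i" and c = 0
      and v = "\<lambda>t. Ev $ i * w t $ i + (transpose D *v f t) $ i - p t $ i - aM t $ i",
     OF S _ start M_pos[of i] _ _ _ _ _ _ t])
  show "continuous_on {0..} (\<lambda>s. w s $ i)" by (intro continuous_intros cont_w)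
  fix s assume "0 < s" "s \<notin> S"
  then obtain w' where "((\<lambda>s. w s $ i) has_real_derivative w') (at s)"
      "Mv $ i * w' = - Ev $ i * w s $ i - (transpose D *v f s) $ i + (p s + aDF s) $ i + aM s $ i"
    using ode unfolding network_ode_at_def by blast
  then show "\<exists>x'. ((\<lambda>s. w s $ i) has_real_derivative x') (at s) \<and>
      Mv $ i * x' = alpha_df_comp (wlo i) (whi i) (wlt i) (wht i) (gl i) (gh i) (w s $ i)
        (Ev $ i * w s $ i + (transpose D *v f s) $ i - p s $ i - aM s $ i)
        - (Ev $ i * w s $ i + (transpose D *v f s) $ i - p s $ i - aM s $ i)"
    using i by (intro exI[of _ w']) (simp add: aDF_nth algebra_simps)
qed (use thresholds[OF i] in auto)

sublocale tail: network_trajectory D y Mv Ev pstar Iu Tc eps fh tbar S f w aM aDF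
proof
  show "continuous_on {tbar..} f" "continuous_on {tbar..} w" "continuous_on {tbar..} aM"
    using cont_f cont_w cont_aM tbar by (auto intro: continuous_on_subset)
  show "network_ode_at y D Mv Ev Iu Tc eps (pstar + aDF t) f w aM t" if "tbar < t" "t \<notin> S" for t
    using ode[of t] p_const[of t] that tbar by simp
  show "w t $ i * aDF t $ i \<le> 0" for t i
    unfolding aDF_nth using thresholds by (auto intro!: alpha_df_comp_sign)
  show "\<exists>G. \<forall>t\<ge>tbar. \<bar>aDF t $ i\<bar> \<le> G + \<bar>Ev $ i * w t $ i + (transpose D *v f t) $ i - pstar $ i - aM t $ i\<bar>" for i
  proof (cases "i \<in> Iw")
    case True
    show ?thesis
    proof (intro exI[of _ "gh i + gl i"] allI impI)
      fix t assume "tbar \<le> t"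
      then show "\<bar>aDF t $ i\<bar> \<le> gh i + gl i + \<bar>Ev $ i * w t $ i + (transpose D *v f t) $ i - pstar $ i - aM t $ i\<bar>"
        using p_const[of t] thresholds[OF True] True unfolding aDF_nth by (auto intro!: abs_alpha_df_comp_le)
    qed
  qed (auto simp: aDF_nth intro!: exI[of _ 0])
  show "\<exists>\<rho>>0. \<forall>t\<ge>tbar. \<bar>w t $ i\<bar> \<le> \<rho> \<longrightarrow> aDF t $ i = 0" for i
  proof (cases "i \<in> Iw")
    case True
    then show ?thesis
      using thresholds[OF True] unfolding aDF_nth
      by (intro exI[of _ "min (wht i) (- wlt i)"]) (auto intro!: alpha_df_comp_eq_0)
  qed (auto simp: aDF_nth intro: exI[of _ 1])
qed (use y_pos M_pos E_pos Tc_pos eps_nonneg eps_Tc fh aM_off tbar S in auto)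

lemma frequency_attractive:
  assumes i: "i \<in> Iw"
  shows "\<exists>t0. \<forall>t\<ge>t0. w t $ i \<in> {wlo i..whi i}"
proof -
  have "wlo i < 0" "0 < whi i" using thresholds[OF i] by auto
  moreover have lim: "((\<lambda>t. w t $ i) \<longlongrightarrow> 0) at_top"
    using tendsto_vec_nth[OF tail.w_tendsto_0, of i] by simp
  ultimately have "\<forall>\<^sub>F t in at_top. wlo i < w t $ i \<and> w t $ i < whi i"
    by (intro eventually_conj order_tendstoD[OF lim])
  then show ?thesis unfolding eventually_at_top_linorder by (auto intro: less_imp_le)
qed

lemma open_loop_same_limit:
  assumes ol: "open_loop_sol y D Mv Ev p fo wo" and "fo 0 = f 0"
    and L: "(f \<longlongrightarrow> L) at_top" "transpose D *v L = pstar"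
  shows "(fo \<longlongrightarrow> L) at_top \<and> (wo \<longlongrightarrow> 0) at_top"
proof -
  have cont: "continuous_on {0..} fo" "continuous_on {0..} wo"
    using ol unfolding open_loop_sol_def by auto
  obtain So where So: "locally_finite_set So"
    and ode_o: "\<And>t. 0 < t \<Longrightarrow> t \<notin> So \<Longrightarrow> network_ode_at y D Mv Ev {} Tc eps (p t) fo wo (\<lambda>_. 0) t"
    using open_loop_sol_network_ode[OF ol] by blast
  interpret open_loop: network_trajectory D y Mv Ev pstar "{}" Tc eps fh tbar So fo wo "\<lambda>_. 0" "\<lambda>_. 0"
  proof
    show "continuous_on {tbar..} fo" "continuous_on {tbar..} wo"
      using cont tbar by (auto intro: continuous_on_subset)
    show "network_ode_at y D Mv Ev {} Tc eps (pstar + 0) fo wo (\<lambda>_. 0) t" if "tbar < t" "t \<notin> So" for t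
      using ode_o[of t] p_const[of t] that tbar by simp
    show "\<exists>G. \<forall>t\<ge>tbar. \<bar>0 $ i\<bar> \<le> G + \<bar>Ev $ i * wo t $ i + (transpose D *v fo t) $ i - pstar $ i - 0 $ i\<bar>"
      for i by (intro exI[of _ 0]) simp
  qed (use y_pos M_pos E_pos fh So in auto)
  obtain Lo where Lo: "(fo \<longlongrightarrow> Lo) at_top" "transpose D *v Lo = pstar"
    using open_loop.f_converges by blast
  define \<delta> where "\<delta> = L - Lo"
  have "(\<Sum>e\<in>UNIV. \<delta> $ e * \<delta> $ e / y $ e) = (\<Sum>e\<in>UNIV. (f 0 - fo 0) $ e * \<delta> $ e / y $ e)"
  proof (rule weighted_flow_component_conserved_limit[where S = "S \<union> So" and u = "\<lambda>t. w t - wo t"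
        and \<tau> = "\<lambda>t. t" and F = at_top])
    show "locally_finite_set (S \<union> So)" using S So by (rule locally_finite_set_Un)
    show "continuous_on {0..} (\<lambda>t. f t - fo t)" using cont_f cont(1) by (intro continuous_intros)
    show "transpose D *v \<delta> = 0" unfolding \<delta>_def matrix_vector_mult_diff_distrib using L(2) Lo(2) by simp
    show "((\<lambda>t. f t - fo t) \<longlongrightarrow> \<delta>) at_top" unfolding \<delta>_def using L(1) Lo(1) by (intro tendsto_intros)
    fix t e assume t: "0 < t" "t \<notin> S \<union> So"
    have "((\<lambda>s. f s $ e - fo s $ e) has_real_derivative y $ e * (D *v w t) $ e - y $ e * (D *v wo t) $ e) (at t)"
      using ode[of t] ode_o[of t] t unfolding network_ode_at_def by (intro DERIV_diff) auto
    then show "((\<lambda>s. (f s - fo s) $ e) has_real_derivative y $ e * (D *v (w t - wo t)) $ e) (at t)"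
      by (simp add: matrix_vector_mult_diff_distrib right_diff_distrib)
  qed (use y_pos in \<open>auto simp: less_imp_neq[symmetric] filterlim_ident\<close>)
  also have "\<dots> = 0" using \<open>fo 0 = f 0\<close> by simp
  finally have "\<delta> = 0" by (rule vec_eq_0_if_weighted_sumsq_eq_0[OF y_pos])
  then show ?thesis using Lo(1) open_loop.w_tendsto_0 unfolding \<delta>_def by simp
qed

end

theorem theorem4p3:
  fixes src snk :: "'e::finite \<Rightarrow> 'i::finite"
    and D :: "real^'i^'e" and y :: "real^'e" and Mv Ev :: "real^'i"
    and Iu Iw :: "'i set"
    and T tt d :: real and N :: nat
    and c eps Tc wlo whi wlt wht gl gh :: "'i \<Rightarrow> real"
    and \<Delta> :: "nat \<Rightarrow> real" and pf :: "nat \<Rightarrow> real \<Rightarrow> real^'i"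
    and p :: "real \<Rightarrow> real^'i" and pstar :: "real^'i" and tbar :: real
    and f :: "real \<Rightarrow> real^'e" and w aM :: "real \<Rightarrow> real^'i"
  assumes graph: "simple_graph src snk" "connected_graph src snk"
    and D_def: "D = incidence_matrix src snk"
    and pos: "\<forall>e. y $ e > 0" "\<forall>i. Mv $ i > 0" "\<forall>i. Ev $ i > 0"
    and sets: "Iw \<subseteq> Iu"
    and mpc_par: "T > 0" "tt > 0" "N = nat \<lceil>tt / T\<rceil>" "d > 0"
      "\<forall>i\<in>Iu. c i > 0 \<and> eps i > 0 \<and> Tc i > 0"
      "\<forall>i\<in>Iw. wlo i < whi i"
    and sampling: "\<Delta> 0 = 0" "strict_mono \<Delta>" "filterlim \<Delta> at_top sequentially"
    and forecasts: "\<forall>j i. piecewise_continuous_on {\<Delta> j .. \<Delta> j + tt} (\<lambda>t. pf j t $ i)"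
    and top_par: "\<forall>i\<in>Iw. gh i > 0 \<and> gl i > 0 \<and> wlo i < wlt i \<and> wlt i < 0 \<and> 0 < wht i \<and> wht i < whi i"
    and p_pc: "\<forall>i. piecewise_continuous_on {0..} (\<lambda>t. p t $ i)"
    and p_const: "0 \<le> tbar" "\<forall>t\<ge>tbar. p t = pstar" "(\<Sum>i\<in>UNIV. pstar $ i) = 0"
    and eps_T: "\<forall>i\<in>Iu. eps i * Tc i < 1"
    and sol: "closed_loop_sol y D Mv Ev p Iu Iw T N c eps Tc d wlo whi \<Delta> pf wlt wht gl gh f w aM"
  shows
    "(\<forall>i\<in>Iw. w 0 $ i \<in> {wlo i .. whi i} \<longrightarrow> (\<forall>t\<ge>0. w t $ i \<in> {wlo i .. whi i}))
     \<and> (\<forall>i\<in>Iw. w 0 $ i \<notin> {wlo i .. whi i} \<longrightarrow> (\<exists>t0. \<forall>t\<ge>t0. w t $ i \<in> {wlo i .. whi i}))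
     \<and> (\<exists>finf. (f \<longlongrightarrow> finf) at_top \<and> (w \<longlongrightarrow> 0) at_top \<and>
          (\<forall>fo wo. open_loop_sol y D Mv Ev p fo wo \<and> fo 0 = f 0 \<and> wo 0 = w 0 \<longrightarrow>
              (fo \<longlongrightarrow> finf) at_top \<and> (wo \<longlongrightarrow> 0) at_top))
     \<and> ((\<lambda>t. alpha_df D Ev Iw wlo whi wlt wht gl gh (f t) (w t) (p t) (aM t) + aM t) \<longlongrightarrow> 0) at_top
     \<and> (aM \<longlongrightarrow> 0) at_top
     \<and> ((\<lambda>t. alpha_df D Ev Iw wlo whi wlt wht gl gh (f t) (w t) (p t) (aM t)) \<longlongrightarrow> 0) at_top"
proof -
  obtain fh where fh: "transpose D *v fh = pstar"
    using connected_graph_zero_sum_in_range[OF _ graph(2) p_const(3)] graph(1) D_def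
    unfolding simple_graph_def by blast
  obtain S where S: "locally_finite_set S" "\<forall>t>0. t \<notin> S \<longrightarrow> network_ode_at y D Mv Ev Iu Tc eps
      (p t + alpha_df D Ev Iw wlo whi wlt wht gl gh (f t) (w t) (p t) (aM t)) f w aM t"
    using closed_loop_sol_network_ode[OF sol sampling(1,3)] mpc_par(5) by (auto simp: less_imp_le)
  interpret two_layer_closed_loop D y Mv Ev Iu Iw Tc eps wlo whi wlt wht gl gh p pstar tbar fh S f w aM
    using pos mpc_par(5) eps_T top_par p_const fh S sol unfolding closed_loop_sol_def
    by unfold_locales auto
  obtain L where L: "(f \<longlongrightarrow> L) at_top" "transpose D *v L = pstar"
    using tail.f_converges by blast
  have "\<exists>finf. (f \<longlongrightarrow> finf) at_top \<and> (w \<longlongrightarrow> 0) at_top \<and>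
      (\<forall>fo wo. open_loop_sol y D Mv Ev p fo wo \<and> fo 0 = f 0 \<and> wo 0 = w 0 \<longrightarrow>
        (fo \<longlongrightarrow> finf) at_top \<and> (wo \<longlongrightarrow> 0) at_top)"
    using L(1) tail.w_tendsto_0 open_loop_same_limit[OF _ _ L] by blast
  then show ?thesis
    using frequency_invariant frequency_attractive tail.a_tendsto_0 tail.b_tendsto_0
      tendsto_add_zero[OF tail.b_tendsto_0 tail.a_tendsto_0] by blast
qed

end
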